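(* Let $(P_n)_{n\ge0}$ be defined by $P_0(m)=m$ and $P_{n+1}(m)=P_n(m+1)+\sum_{i=0}^{n}P_i(m)P_{n-i}(m)$, write $P_n(m)=\sum_{i=1}^{n+2}p^{(i)}_n m^{n+2-i}$ (with $p^{(i)}_n=0$ for $i>n+2$), and let $a_i(z)=\sum_{n\ge0}p^{(i)}_n z^n$. Then for every $i>2$, \[a_i(z)=z^{i-2}\left(\frac{Q_i(z)}{(1-4z)^{i-2}}+\frac{S_i(z)}{(1-4z)^{i-\frac32}}\right),\] where $Q_i$ and $S_i$ are polynomials in $z$ with integer coefficients, $\deg Q_i=\left\lfloor\frac{i-3}{2}\right\rfloor$ and $\deg S_i=\left\lfloor\frac{i-1}{2}\right\rfloor$.
   Context: $p^{(i)}_n$ is the $i$-th leading coefficient of $P_n$, which has degree $n+1$. The identity is between power series around $z=0$ (principal branch of $(1-4z)^{1/2}$). *)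

theory Defs
  imports "HOL-Computational_Algebra.Computational_Algebra"
begin

fun P :: "nat \<Rightarrow> int poly" where
  "P 0 = [:0, 1:]"
| "P (Suc n) = pcompose (P n) [:1, 1:] + (\<Sum>i\<le>n. P i * P (n - i))"

definition pc :: "nat \<Rightarrow> nat \<Rightarrow> int" where
  "pc i n = (if 1 \<le> i \<and> i \<le> n + 2 then coeff (P n) (n + 2 - i) else 0)"

definition a :: "nat \<Rightarrow> real fps" where
  "a i = Abs_fps (\<lambda>n. of_int (pc i n))"

definition one_minus_4z_pow :: "real \<Rightarrow> real fps" where
  "one_minus_4z_pow r = fps_compose (fps_binomial r) (- 4 * fps_X)"

end

theory Submission
  imports Defs
begin

text \<open>Comparing coefficients in the recurrence for \<open>P\<close> turns the Taylor shift \<open>m \<mapsto> m + 1\<close> into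
  Hasse derivatives and the convolution into products, giving a recurrence for
  \<open>b_gf i = z^(2-i) a i\<close>. With \<open>s = \<surd>(1-4z)\<close> one finds \<open>b_gf 1 = (1 - s)/2\<close>, and by induction
  \<open>b_gf i = S(z) (1-4z)^((3-2i)/2) + Q(z) (1-4z)^((4-2i)/2)\<close> with integer polynomials \<open>S\<close>,
  \<open>Q\<close>, since Hasse derivatives and products preserve this shape.

  For the degrees, write \<open>b_gf i = (1-4z)^((3-2i)/2) R\<^sub>i(s)\<close>, a polynomial of degree at most
  \<open>i - 1\<close> in \<open>s\<close> whose even and odd parts are \<open>S\<close> and \<open>Q\<close> (as \<open>z = (1-s\<^sup>2)/4\<close>). In the
  basis of half-integer powers of \<open>1-4z\<close> the Hasse derivatives act diagonally, so \<open>R\<^sub>i\<close> obeys a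
  polynomial recurrence. From it the top coefficients of \<open>R\<^sub>i\<close> have signs alternating in
  a fixed pattern, hence do not vanish, which gives \<open>deg S = \<lfloor>(i-1)/2\<rfloor>\<close> and
  \<open>deg Q = \<lfloor>(i-3)/2\<rfloor>\<close>.\<close>

section \<open>Powers of \<open>1 - 4z\<close>\<close>

lemma one_minus_4z_pow_nth: "one_minus_4z_pow r $ n = (r gchoose n) * (-4) ^ n"
proof -
  have "(-4 * fps_X :: real fps) = fps_const (-4) * fps_X"
    by (simp add: numeral_fps_const)
  then show ?thesis
    unfolding one_minus_4z_pow_def by (simp only: fps_compose_linear) simp
qed

lemma one_minus_4z_pow_add: "one_minus_4z_pow (r + q) = one_minus_4z_pow r * one_minus_4z_pow q"
  unfolding one_minus_4z_pow_def
  by (subst fps_compose_mult_distrib[symmetric]) (simp_all add: fps_binomial_add_mult)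

lemma one_minus_4z_pow_of_nat: "one_minus_4z_pow (of_nat m) = (1 - 4 * fps_X) ^ m"
  by (simp add: one_minus_4z_pow_def fps_binomial_of_nat fps_compose_power[symmetric]
      fps_compose_add_distrib)

definition sqrt_pow :: "int \<Rightarrow> real fps" where
  "sqrt_pow d = one_minus_4z_pow (of_int d / 2)"

lemma sqrt_pow_nth: "sqrt_pow d $ n = ((of_int d / 2) gchoose n) * (-4) ^ n"
  by (simp add: sqrt_pow_def one_minus_4z_pow_nth)

lemma sqrt_pow_add: "sqrt_pow (d + e) = sqrt_pow d * sqrt_pow e"
  by (simp add: sqrt_pow_def add_divide_distrib flip: one_minus_4z_pow_add)

lemma sqrt_pow_even: "sqrt_pow (2 * int m) = (1 - 4 * fps_X) ^ m"
  using one_minus_4z_pow_of_nat[of m] by (simp add: sqrt_pow_def)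

lemma sqrt_pow_0 [simp]: "sqrt_pow 0 = 1"
  using sqrt_pow_even[of 0] by simp

lemma sqrt_pow_2: "sqrt_pow 2 = 1 - 4 * fps_X"
  using sqrt_pow_even[of 1] by simp

lemma sqrt_pow_uminus_mult [simp]: "sqrt_pow (- d) * sqrt_pow d = 1"
  and sqrt_pow_mult_uminus [simp]: "sqrt_pow d * sqrt_pow (- d) = 1"
  by (simp_all flip: sqrt_pow_add)

lemma sqrt_pow_minus_one_nth: "sqrt_pow (-1) $ n = of_nat ((2 * n) choose n)"
proof (induction n)
  case 0
  show ?case by (simp add: sqrt_pow_nth)
next
  case (Suc n)
  have rec: "Suc n * ((2 * Suc n) choose Suc n) = 2 * (2 * n + 1) * ((2 * n) choose n)"
  proof -
    have "Suc n * ((2 * n + 1) choose n) = (2 * n + 1) * ((2 * n) choose n)"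
      using binomial_absorb_comp[of "Suc (2 * n)" n] by (simp add: Suc_diff_le del: binomial_Suc_Suc)
    moreover have "(2 * Suc n choose Suc n) * Suc n = 2 * (Suc n * ((2 * n + 1) choose n))"
      using Suc_times_binomial_eq[of "2 * n + 1" n] by (simp del: binomial_Suc_Suc)
    ultimately show ?thesis by (simp del: binomial_Suc_Suc add: ac_simps)
  qed
  have half: "(of_int (-1) / 2 :: real) = -1/2"
    by simp
  have "of_nat (Suc n) * ((-1/2::real) gchoose Suc n) = (-1/2 - of_nat n) * ((-1/2) gchoose n)"
    using gbinomial_mult_1[of "-1/2::real" n] by (simp add: algebra_simps)
  then have "of_nat (Suc n) * sqrt_pow (-1) $ Suc n = (-1/2 - of_nat n) * ((-1/2) gchoose n) * (-4) ^ Suc n"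
    unfolding sqrt_pow_nth half by (simp only: mult.assoc[symmetric])
  also have "\<dots> = 2 * (2 * of_nat n + 1) * sqrt_pow (-1) $ n"
    unfolding sqrt_pow_nth half by (simp add: algebra_simps)
  also have "\<dots> = of_nat (Suc n) * of_nat ((2 * Suc n) choose Suc n)"
    using Suc arg_cong[OF rec, of real] by (simp del: binomial_Suc_Suc add: algebra_simps)
  finally show ?case by (subst (asm) mult_left_cancel) simp_all
qed

definition int_fps :: "'a::comm_ring_1 fps \<Rightarrow> bool" where
  "int_fps f \<longleftrightarrow> (\<forall>n. f $ n \<in> \<int>)"

lemma int_fps_mult: "int_fps f \<Longrightarrow> int_fps g \<Longrightarrow> int_fps (f * g)"
  unfolding int_fps_def fps_mult_nth by (auto intro!: Ints_sum)

lemma int_fps_power: "int_fps f \<Longrightarrow> int_fps (f ^ k)"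
  by (induction k) (simp_all add: int_fps_mult, simp add: int_fps_def)

lemma sqrt_pow_minus_nat: "sqrt_pow (- int k) = sqrt_pow (-1) ^ k"
proof (induction k)
  case (Suc k)
  have "- int (Suc k) = -1 + - int k"
    by simp
  then show ?case
    using Suc by (simp only: sqrt_pow_add power_Suc)
qed simp

lemma sqrt_pow_nth_Ints: "sqrt_pow d $ n \<in> \<int>"
proof -
  have "sqrt_pow d = sqrt_pow (2 * int (nat d)) * sqrt_pow (- int (nat \<bar>d\<bar>))"
    by (simp flip: sqrt_pow_add)
  also have "\<dots> = (1 - 4 * fps_X) ^ nat d * sqrt_pow (-1) ^ nat \<bar>d\<bar>"
    by (simp only: sqrt_pow_even sqrt_pow_minus_nat)
  finally have "sqrt_pow d = (1 - 4 * fps_X) ^ nat d * sqrt_pow (-1) ^ nat \<bar>d\<bar>" .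
  moreover have "int_fps (1 - 4 * fps_X :: real fps)" "int_fps (sqrt_pow (-1))"
    by (auto simp: int_fps_def numeral_fps_const sqrt_pow_minus_one_nth)
  ultimately show ?thesis
    using int_fps_mult int_fps_power unfolding int_fps_def by metis
qed

section \<open>Hasse derivatives\<close>

definition fps_hasse :: "nat \<Rightarrow> 'a::comm_ring_1 fps \<Rightarrow> 'a fps" where
  "fps_hasse k f = Abs_fps (\<lambda>n. of_nat ((n + k) choose k) * f $ (n + k))"

lemma fps_hasse_nth [simp]: "fps_hasse k f $ n = of_nat ((n + k) choose k) * f $ (n + k)"
  by (simp add: fps_hasse_def)

lemma fps_hasse_0 [simp]: "fps_hasse 0 f = f"
  by (rule fps_ext) simp

lemma fps_hasse_zero [simp]: "fps_hasse k 0 = 0"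
  by (rule fps_ext) simp

lemma fps_hasse_add: "fps_hasse k (f + g) = fps_hasse k f + fps_hasse k g"
  by (rule fps_ext) (simp add: algebra_simps)

lemma fps_hasse_diff: "fps_hasse k (f - g) = fps_hasse k f - fps_hasse k g"
  by (rule fps_ext) (simp add: algebra_simps)

lemma fps_hasse_const_mult: "fps_hasse k (fps_const c * f) = fps_const c * fps_hasse k f"
  by (rule fps_ext) (simp add: algebra_simps)

lemma fps_hasse_sum: "fps_hasse k (\<Sum>x\<in>A. f x) = (\<Sum>x\<in>A. fps_hasse k (f x))"
  by (induction A rule: infinite_finite_induct) (simp_all add: fps_hasse_add)

lemma fps_hasse_const: "k > 0 \<Longrightarrow> fps_hasse k (fps_const c) = 0"
  by (rule fps_ext) simp

lemma fps_hasse_1 [simp]: "k > 0 \<Longrightarrow> fps_hasse k 1 = 0"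
  using fps_hasse_const[of k 1] by simp

lemma fps_hasse_mult: "fps_hasse k (f * g) = (\<Sum>a\<le>k. fps_hasse a f * fps_hasse (k - a) g)"
proof (rule fps_ext)
  fix n
  define F where "F x a = of_nat (x choose a) * of_nat ((n + k - x) choose (k - a)) * (f $ x * g $ (n + k - x))"
    for x a
  have "fps_hasse k (f * g) $ n = (\<Sum>x\<le>n+k. of_nat ((n + k) choose k) * (f $ x * g $ (n + k - x)))"
    by (simp add: fps_mult_nth atLeast0AtMost sum_distrib_left)
  also have "\<dots> = (\<Sum>x\<le>n+k. \<Sum>a\<le>k. F x a)"
  proof (rule sum.cong[OF refl])
    fix x assume "x \<in> {..n+k}"
    then have "(n + k) choose k = (\<Sum>a\<le>k. (x choose a) * ((n + k - x) choose (k - a)))"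
      using binomial_Vandermonde[of x "n + k - x" k] by (simp add: atLeast0AtMost)
    then show "of_nat ((n + k) choose k) * (f $ x * g $ (n + k - x)) = (\<Sum>a\<le>k. F x a)"
      by (simp add: F_def of_nat_sum sum_distrib_right)
  qed
  also have "\<dots> = (\<Sum>a\<le>k. \<Sum>x\<le>n+k. F x a)"
    by (rule sum.swap)
  also have "\<dots> = (\<Sum>a\<le>k. \<Sum>p\<le>n. F (p + a) a)"
  proof (rule sum.cong[OF refl])
    fix a assume a: "a \<in> {..k}"
    have "(\<Sum>x\<le>n+k. F x a) = (\<Sum>x\<in>{a..n+a}. F x a)"
      by (rule sum.mono_neutral_right) (use a in \<open>auto simp: F_def binomial_eq_0\<close>)
    also have "{a..n+a} = (\<lambda>p. p + a) ` {..n}"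
      by (simp add: atLeast0AtMost[symmetric])
    finally show "(\<Sum>x\<le>n+k. F x a) = (\<Sum>p\<le>n. F (p + a) a)"
      by (simp add: sum.reindex)
  qed
  also have "\<dots> = (\<Sum>a\<le>k. fps_hasse a f * fps_hasse (k - a) g) $ n"
    unfolding fps_sum_nth fps_mult_nth atLeast0AtMost
  proof (intro sum.cong refl)
    fix a p assume "a \<in> {..k}" "p \<in> {..n}"
    then have "n - p + (k - a) = n + k - (p + a)" "k - a + (n - p) = k + n - (a + p)"
      by auto
    then show "F (p + a) a = fps_hasse a f $ p * fps_hasse (k - a) g $ (n - p)"
      by (simp add: F_def add.commute)
  qed
  finally show "fps_hasse k (f * g) $ n = (\<Sum>a\<le>k. fps_hasse a f * fps_hasse (k - a) g) $ n" .
qed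

lemma fps_hasse_one_minus_4z_pow:
  "fps_hasse k (one_minus_4z_pow r) = fps_const (one_minus_4z_pow r $ k) * one_minus_4z_pow (r - of_nat k)"
proof (rule fps_ext)
  fix n
  have "(r gchoose (n + k)) * (of_nat (n + k) gchoose k) = (r gchoose k) * ((r - of_nat k) gchoose n)"
    using gbinomial_trinomial_revision[of k "n + k" r] by simp
  then show "fps_hasse k (one_minus_4z_pow r) $ n
      = (fps_const (one_minus_4z_pow r $ k) * one_minus_4z_pow (r - of_nat k)) $ n"
    by (simp add: one_minus_4z_pow_nth binomial_gbinomial power_add mult_ac)
qed

lemma fps_hasse_sqrt_pow:
  "fps_hasse k (sqrt_pow d) = fps_const (sqrt_pow d $ k) * sqrt_pow (d - 2 * int k)"
proof -
  have "of_int d / 2 - of_nat k = (of_int (d - 2 * int k) / 2 :: real)"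
    by (simp add: field_simps)
  then show ?thesis
    by (simp only: sqrt_pow_def fps_hasse_one_minus_4z_pow)
qed

section \<open>Integral combinations of powers of \<open>\<surd>(1-4z)\<close>\<close>

definition int_poly :: "'a::comm_ring_1 poly \<Rightarrow> bool" where
  "int_poly p \<longleftrightarrow> (\<forall>n. coeff p n \<in> \<int>)"

lemma int_poly_0 [simp]: "int_poly 0"
  by (simp add: int_poly_def)

lemma int_poly_1 [simp]: "int_poly 1"
  by (simp add: int_poly_def coeff_1)

lemma int_poly_pCons [simp]: "int_poly (pCons c p) \<longleftrightarrow> c \<in> \<int> \<and> int_poly p"
  by (auto simp: int_poly_def coeff_pCons split: nat.split)

lemma int_poly_add: "int_poly p \<Longrightarrow> int_poly q \<Longrightarrow> int_poly (p + q)"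
  by (simp add: int_poly_def)

lemma int_poly_mult: "int_poly p \<Longrightarrow> int_poly q \<Longrightarrow> int_poly (p * q)"
  unfolding int_poly_def coeff_mult by (auto intro!: Ints_sum)

lemma int_poly_smult: "c \<in> \<int> \<Longrightarrow> int_poly p \<Longrightarrow> int_poly (smult c p)"
  by (simp add: int_poly_def)

lemma fps_hasse_fps_of_poly:
  assumes "int_poly A"
  obtains B where "int_poly B" "fps_hasse k (fps_of_poly A) = fps_of_poly B"
proof
  define B where "B = (\<Sum>n\<le>degree A. monom (of_nat ((n + k) choose k) * coeff A (n + k)) n)"
  have "coeff B m = of_nat ((m + k) choose k) * coeff A (m + k)" for m
    by (cases "m \<le> degree A") (simp_all add: B_def coeff_sum coeff_monom coeff_eq_0)
  then show "int_poly B" "fps_hasse k (fps_of_poly A) = fps_of_poly B"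
    using assms by (auto simp: int_poly_def intro!: fps_ext)
qed

lemma fps_of_poly_1_minus_4X: "fps_of_poly [:1, -4:] = (1 - 4 * fps_X :: real fps)"
  by (simp add: fps_of_poly_pCons numeral_fps_const)

lemma sqrt_pow_add_2: "sqrt_pow (d + 2) = fps_of_poly [:1, -4:] * sqrt_pow d"
  by (simp add: sqrt_pow_add sqrt_pow_2 fps_of_poly_1_minus_4X mult.commute)

definition int_form :: "int \<Rightarrow> real fps \<Rightarrow> bool" where
  "int_form d f \<longleftrightarrow> (\<exists>S Q. int_poly S \<and> int_poly Q \<and>
      f = fps_of_poly S * sqrt_pow d + fps_of_poly Q * sqrt_pow (d + 1))"

lemma int_formI:
  "int_poly S \<Longrightarrow> int_poly Q \<Longrightarrow> f = fps_of_poly S * sqrt_pow d + fps_of_poly Q * sqrt_pow (d + 1)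
    \<Longrightarrow> int_form d f"
  unfolding int_form_def by blast

lemma int_formE:
  assumes "int_form d f"
  obtains S Q where "int_poly S" "int_poly Q"
    "f = fps_of_poly S * sqrt_pow d + fps_of_poly Q * sqrt_pow (d + 1)"
  using assms unfolding int_form_def by blast

lemma int_form_sqrt_pow: "int_poly S \<Longrightarrow> int_form d (fps_of_poly S * sqrt_pow d)"
  by (rule int_formI[of S 0]) simp_all

lemma int_form_0: "int_form d 0"
  using int_form_sqrt_pow[of 0] by simp

lemma int_form_add:
  assumes "int_form d f" "int_form d g"
  shows "int_form d (f + g)"
proof -
  obtain S Q S' Q' where *: "int_poly S" "int_poly Q" "int_poly S'" "int_poly Q'"
    "f = fps_of_poly S * sqrt_pow d + fps_of_poly Q * sqrt_pow (d + 1)"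
    "g = fps_of_poly S' * sqrt_pow d + fps_of_poly Q' * sqrt_pow (d + 1)"
    using assms by (elim int_formE)
  show ?thesis
    by (rule int_formI[of "S + S'" "Q + Q'"]) (simp_all add: * int_poly_add fps_of_poly_add algebra_simps)
qed

lemma int_form_sum: "(\<And>x. x \<in> A \<Longrightarrow> int_form d (f x)) \<Longrightarrow> int_form d (\<Sum>x\<in>A. f x)"
  by (induction A rule: infinite_finite_induct) (simp_all add: int_form_0 int_form_add)

lemma int_form_const_mult:
  assumes "c \<in> \<int>" "int_form d f"
  shows "int_form d (fps_const c * f)"
proof -
  obtain S Q where *: "int_poly S" "int_poly Q"
    "f = fps_of_poly S * sqrt_pow d + fps_of_poly Q * sqrt_pow (d + 1)"
    using assms(2) by (elim int_formE)
  show ?thesis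
    by (rule int_formI[of "smult c S" "smult c Q"])
      (simp_all add: * assms(1) int_poly_smult fps_of_poly_smult algebra_simps)
qed

lemma int_form_mult:
  assumes "int_form d f" "int_form e g"
  shows "int_form (d + e) (f * g)"
proof -
  obtain S Q S' Q' where *: "int_poly S" "int_poly Q" "int_poly S'" "int_poly Q'"
    "f = fps_of_poly S * sqrt_pow d + fps_of_poly Q * sqrt_pow (d + 1)"
    "g = fps_of_poly S' * sqrt_pow e + fps_of_poly Q' * sqrt_pow (e + 1)"
    using assms by (elim int_formE)
  have e1: "sqrt_pow d * sqrt_pow e = sqrt_pow (d + e)"
    and e2: "sqrt_pow d * sqrt_pow (e + 1) = sqrt_pow (d + e + 1)"
    and e3: "sqrt_pow (d + 1) * sqrt_pow e = sqrt_pow (d + e + 1)"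
    by (simp_all add: ac_simps flip: sqrt_pow_add)
  have "sqrt_pow (d + 1) * sqrt_pow (e + 1) = sqrt_pow (d + e + 2)"
    by (simp add: ac_simps flip: sqrt_pow_add)
  then have e4: "sqrt_pow (d + 1) * sqrt_pow (e + 1) = fps_of_poly [:1, -4:] * sqrt_pow (d + e)"
    by (simp only: sqrt_pow_add_2)
  have "f * g = fps_of_poly S * fps_of_poly S' * (sqrt_pow d * sqrt_pow e)
      + fps_of_poly S * fps_of_poly Q' * (sqrt_pow d * sqrt_pow (e + 1))
      + fps_of_poly Q * fps_of_poly S' * (sqrt_pow (d + 1) * sqrt_pow e)
      + fps_of_poly Q * fps_of_poly Q' * (sqrt_pow (d + 1) * sqrt_pow (e + 1))"
    unfolding *(5,6) by (simp add: algebra_simps)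
  also have "\<dots> = fps_of_poly (S * S' + Q * Q' * [:1, -4:]) * sqrt_pow (d + e)
      + fps_of_poly (S * Q' + Q * S') * sqrt_pow (d + e + 1)"
    unfolding e1 e2 e3 e4 fps_of_poly_add fps_of_poly_mult by (simp add: algebra_simps)
  finally have "f * g = fps_of_poly (S * S' + Q * Q' * [:1, -4:]) * sqrt_pow (d + e)
      + fps_of_poly (S * Q' + Q * S') * sqrt_pow (d + e + 1)" .
  moreover have "int_poly [:1, -4 :: real:]"
    by simp
  ultimately show ?thesis
    using * by (intro int_formI[of "S * S' + Q * Q' * [:1, -4:]" "S * Q' + Q * S'"] int_poly_add int_poly_mult)

qed

lemma int_form_mono:
  assumes "d \<le> d'" "int_form d' f"
  shows "int_form d f"
proof -
  have "int_form (d' - int n) f" for n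
  proof (induction n)
    case (Suc n)
    define c where "c = d' - int (Suc n)"
    have "int_form (c + 1) f"
      using Suc by (simp add: c_def)
    then obtain S Q where SQ: "int_poly S" "int_poly Q"
      and f: "f = fps_of_poly S * sqrt_pow (c + 1) + fps_of_poly Q * sqrt_pow (c + 2)"
      by (elim int_formE) (simp add: add.assoc)
    have "f = fps_of_poly (Q * [:1, -4:]) * sqrt_pow c + fps_of_poly S * sqrt_pow (c + 1)"
      unfolding f sqrt_pow_add_2 fps_of_poly_mult by (simp only: mult.assoc add.commute)
    moreover have "int_poly (Q * [:1, -4:])"
      by (rule int_poly_mult[OF SQ(2)]) simp
    ultimately have "int_form c f"
      using SQ(1) by (intro int_formI)
    then show ?case
      by (simp add: c_def)
  qed (use assms in simp)
  from this[of "nat (d' - d)"] show ?thesis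
    using assms(1) by simp
qed

lemma int_form_hasse:
  assumes "int_form d f"
  shows "int_form (d - 2 * int k) (fps_hasse k f)"
proof -
  have poly_term: "int_form (e - 2 * int k) (fps_hasse k (fps_of_poly A * sqrt_pow e))"
    if A: "int_poly A" for A e
  proof -
    have leibniz_term: "int_form (e - 2 * int k) (fps_hasse j (fps_of_poly A) * fps_hasse (k - j) (sqrt_pow e))"
      if "j \<le> k" for j
    proof -
      obtain B where B: "int_poly B" "fps_hasse j (fps_of_poly A) = fps_of_poly B"
        using fps_hasse_fps_of_poly[OF A] .
      have eq: "fps_hasse j (fps_of_poly A) * fps_hasse (k - j) (sqrt_pow e)
          = fps_of_poly (smult (sqrt_pow e $ (k - j)) B) * sqrt_pow (e - 2 * int (k - j))"
        by (simp only: B fps_hasse_sqrt_pow fps_of_poly_smult mult_ac)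
      have "e - 2 * int k \<le> e - 2 * int (k - j)"
        using that by simp
      moreover have "int_form (e - 2 * int (k - j))
          (fps_of_poly (smult (sqrt_pow e $ (k - j)) B) * sqrt_pow (e - 2 * int (k - j)))"
        by (intro int_form_sqrt_pow int_poly_smult sqrt_pow_nth_Ints B)
      ultimately show ?thesis
        unfolding eq by (rule int_form_mono)
    qed
    show ?thesis
      unfolding fps_hasse_mult by (intro int_form_sum leibniz_term) simp
  qed
  obtain S Q where SQ: "int_poly S" "int_poly Q"
    and f: "f = fps_of_poly S * sqrt_pow d + fps_of_poly Q * sqrt_pow (d + 1)"
    using assms by (elim int_formE)
  have "int_form (d - 2 * int k) (fps_hasse k (fps_of_poly S * sqrt_pow d))"
    by (rule poly_term[OF SQ(1)])
  moreover have "int_form (d - 2 * int k) (fps_hasse k (fps_of_poly Q * sqrt_pow (d + 1)))"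
    by (rule int_form_mono[OF _ poly_term[OF SQ(2)]]) simp
  ultimately show ?thesis
    unfolding f fps_hasse_add by (rule int_form_add)
qed

section \<open>The generating functions of the leading coefficients\<close>

lemma degree_P: "degree (P n) \<le> n + 1"
proof (induction n rule: less_induct)
  case (less n)
  show ?case
  proof (cases n)
    case 0 then show ?thesis by simp
  next
    case (Suc m)
    have d1: "degree (pcompose (P m) [:1,1:]) \<le> m + 1"
      using degree_pcompose_le[of "P m" "[:1,1:]"] less[of m] Suc by simp
    have d2: "degree (\<Sum>i\<le>m. P i * P (m - i)) \<le> m + 2"
    proof (rule degree_sum_le)
      fix i assume i: "i \<in> {..m}"
      have "degree (P i * P (m - i)) \<le> degree (P i) + degree (P (m - i))"
        by (rule degree_mult_le)
      also have "\<dots> \<le> (i + 1) + (m - i + 1)" using less[of i] less[of "m - i"] Suc i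
        by (intro add_mono) auto
      also have "\<dots> = m + 2" using i by simp
      finally show "degree (P i * P (m - i)) \<le> m + 2" .
    qed simp
    show ?thesis using Suc degree_add_le[OF order_trans[OF d1] d2] by simp
  qed
qed

lemma coeff_P_nonzero: "coeff (P n) k \<noteq> 0 \<Longrightarrow> k \<le> n + 1"
  using degree_P[of n] le_degree order_trans by blast

lemma coeff_one_plus_X_power: "coeff ([:1, 1:] ^ m) k = (of_nat (m choose k) :: 'a :: comm_ring_1)"
proof (cases "k \<le> m")
  case True then show ?thesis by (simp add: coeff_linear_poly_power)
next
  case False
  have "degree ([:1, 1::'a:] ^ m) \<le> m" using degree_power_le[of "[:1, 1::'a:]" m] by simp
  then show ?thesis using False by (simp add: coeff_eq_0 binomial_eq_0)
qed

lemma coeff_pcompose_one_plus_X: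
  fixes p :: "int poly"
  assumes "degree p \<le> D"
  shows "coeff (pcompose p [:1, 1:]) k = (\<Sum>m\<le>D. coeff p m * of_nat (m choose k))"
proof -
  have dm: "degree (map_poly (\<lambda>x. [:x:]) p) = degree p"
    by (rule degree_map_poly) simp
  have "pcompose p [:1, 1:] = (\<Sum>m\<le>degree p. smult (coeff p m) ([:1, 1:] ^ m))"
    unfolding pcompose_altdef poly_altdef dm
    by (rule sum.cong[OF refl]) (simp add: coeff_map_poly)
  then have "coeff (pcompose p [:1, 1:]) k = (\<Sum>m\<le>degree p. coeff p m * of_nat (m choose k))"
    by (simp add: coeff_sum coeff_one_plus_X_power)
  also have "\<dots> = (\<Sum>m\<le>D. coeff p m * of_nat (m choose k))"
    by (rule sum.mono_neutral_left) (use assms in \<open>auto simp: coeff_eq_0\<close>)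
  finally show ?thesis .
qed

text \<open>\<open>b_gf j $ n\<close> is the coefficient of \<open>m^n\<close> in \<open>P (n + j - 2)\<close>, i.e. \<open>pc j (n + j - 2)\<close>,
  so that \<open>a j = z^(j-2) * b_gf j\<close> (\<open>a_eq_b_gf\<close>).\<close>
definition b_gf :: "nat \<Rightarrow> real fps" where
  "b_gf j = Abs_fps (\<lambda>m. if 2 \<le> m + j then of_int (pc j (m + j - 2)) else 0)"

lemma b_gf_nth: "1 \<le> j \<Longrightarrow> 2 \<le> m + j \<Longrightarrow> b_gf j $ m = of_int (coeff (P (m + j - 2)) m)"
proof -
  assume "1 \<le> j" "2 \<le> m + j"
  then have "m + j - 2 + 2 = m + j" by simp
  then show ?thesis using \<open>1 \<le> j\<close> \<open>2 \<le> m + j\<close> by (simp add: b_gf_def pc_def)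
qed

lemma b_gf_nth_eq_0: "m + j < 2 \<Longrightarrow> b_gf j $ m = 0"
  by (simp add: b_gf_def)

lemma b_gf_nth_nonzero: "b_gf j $ m \<noteq> 0 \<Longrightarrow> 2 \<le> m + j"
  by (rule ccontr) (simp add: b_gf_nth_eq_0)

lemma a_eq_b_gf: "2 \<le> i \<Longrightarrow> a i = fps_X ^ (i - 2) * b_gf i"
proof (rule fps_ext)
  fix n assume i: "2 \<le> i"
  show "a i $ n = (fps_X ^ (i - 2) * b_gf i) $ n"
  proof (cases "n < i - 2")
    case True then show ?thesis by (auto simp: a_def pc_def fps_X_power_mult_nth)
  next
    case False
    then have "n - (i - 2) + i - 2 = n" "2 \<le> n - (i - 2) + i" using i by auto
    then show ?thesis using False by (simp add: a_def b_gf_def fps_X_power_mult_nth)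
  qed
qed

lemma P_convolution_coeff:
  assumes i: "1 \<le> i" and N: "N + 3 = n + i" and x: "x \<le> n"
  shows "(\<Sum>k\<le>N. of_int (coeff (P k) x) * of_int (coeff (P (N - k)) (n - x)) :: real)
       = (\<Sum>j\<in>{1..i}. b_gf j $ x * b_gf (i + 1 - j) $ (n - x))"
proof -
  define A where "A = {k. k \<le> N \<and> x \<le> k + 1 \<and> n - x \<le> N - k + 1}"
  define B where "B = {j. 1 \<le> j \<and> j \<le> i \<and> 2 \<le> x + j \<and> 2 \<le> n - x + (i + 1 - j)}"
  have "(\<Sum>k\<le>N. of_int (coeff (P k) x) * of_int (coeff (P (N - k)) (n - x)) :: real)
      = (\<Sum>k\<in>A. of_int (coeff (P k) x) * of_int (coeff (P (N - k)) (n - x)))"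
  proof (rule sum.mono_neutral_right)
    show "\<forall>k\<in>{..N} - A. (of_int (coeff (P k) x) * of_int (coeff (P (N - k)) (n - x)) :: real) = 0"
      by (auto simp: A_def dest: coeff_P_nonzero)
  qed (auto simp: A_def)
  also have "\<dots> = (\<Sum>j\<in>B. b_gf j $ x * b_gf (i + 1 - j) $ (n - x))"
  proof (rule sum.reindex_bij_witness[where j = "\<lambda>k. k + 2 - x" and i = "\<lambda>j. j + x - 2"])
    fix k assume k: "k \<in> A"
    show "k + 2 - x + x - 2 = k" using k by (auto simp: A_def)
    show "k + 2 - x \<in> B" using k N x by (auto simp: B_def A_def)
    have e1: "x + (k + 2 - x) - 2 = k" using k by (auto simp: A_def)
    have e2: "n - x + (i + 1 - (k + 2 - x)) - 2 = N - k" using k N x by (auto simp: A_def)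
    show "b_gf (k + 2 - x) $ x * b_gf (i + 1 - (k + 2 - x)) $ (n - x)
        = of_int (coeff (P k) x) * of_int (coeff (P (N - k)) (n - x))"
    proof -
      have c1: "1 \<le> k + 2 - x" "2 \<le> x + (k + 2 - x)" using k by (auto simp: A_def)
      have c2: "1 \<le> i + 1 - (k + 2 - x)" "2 \<le> n - x + (i + 1 - (k + 2 - x))"
        using k N x by (auto simp: A_def)
      have b1: "b_gf (k + 2 - x) $ x = of_int (coeff (P k) x)"
        using b_gf_nth[OF c1] unfolding e1 .
      have b2: "b_gf (i + 1 - (k + 2 - x)) $ (n - x) = of_int (coeff (P (N - k)) (n - x))"
        using b_gf_nth[OF c2] unfolding e2 .
      show ?thesis by (simp only: b1 b2)
    qed
  next
    fix j assume j: "j \<in> B"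
    show "j + x - 2 + 2 - x = j" using j by (auto simp: B_def)
    show "j + x - 2 \<in> A" using j N x by (auto simp: B_def A_def)
  qed
  also have "\<dots> = (\<Sum>j\<in>{1..i}. b_gf j $ x * b_gf (i + 1 - j) $ (n - x))"
  proof (rule sum.mono_neutral_left)
    show "\<forall>j\<in>{1..i} - B. b_gf j $ x * b_gf (i + 1 - j) $ (n - x) = 0"
      by (auto simp: B_def dest!: b_gf_nth_nonzero)
  qed (auto simp: B_def)
  finally show ?thesis .
qed

lemma coeff_P_shift:
  assumes i: "1 \<le> i" and N: "N + 3 = n + i"
  shows "(of_int (coeff (pcompose (P N) [:1,1:]) n) :: real) = (\<Sum>j\<in>{1..<i}. fps_hasse (i - 1 - j) (b_gf j)) $ n"
proof -
  have "(of_int (coeff (pcompose (P N) [:1,1:]) n) :: real)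
      = (\<Sum>m\<le>N + 1. of_int (coeff (P N) m) * of_nat (m choose n))"
    by (simp add: coeff_pcompose_one_plus_X[OF degree_P])
  also have "\<dots> = (\<Sum>m\<in>{n..N+1}. of_int (coeff (P N) m) * of_nat (m choose n))"
    by (rule sum.mono_neutral_right) auto
  also have "\<dots> = (\<Sum>j\<in>{1..<i}. of_nat ((n + (i - 1 - j)) choose (i - 1 - j)) * b_gf j $ (n + (i - 1 - j)))"
  proof (rule sum.reindex_bij_witness[where j = "\<lambda>m. n + i - 1 - m" and i = "\<lambda>j. n + i - 1 - j"])
    fix m assume m: "m \<in> {n..N+1}"
    show "n + i - 1 - (n + i - 1 - m) = m" using m N by auto
    show "n + i - 1 - m \<in> {1..<i}" using m N by auto
    have e1: "n + (i - 1 - (n + i - 1 - m)) = m" using m N by auto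
    have e2: "i - 1 - (n + i - 1 - m) = m - n" using m N by auto
    have e3: "m + (n + i - 1 - m) - 2 = N" using m N by auto
    have "b_gf (n + i - 1 - m) $ m = of_int (coeff (P N) m)"
      using b_gf_nth[of "n + i - 1 - m" m] m N e3 by auto
    moreover have "m choose (m - n) = m choose n"
      using m by (simp add: binomial_symmetric[symmetric])
    ultimately show "of_nat ((n + (i - 1 - (n + i - 1 - m))) choose (i - 1 - (n + i - 1 - m))) * b_gf (n + i - 1 - m) $ (n + (i - 1 - (n + i - 1 - m)))
        = of_int (coeff (P N) m) * of_nat (m choose n)"
      unfolding e1 unfolding e2 by simp
  next
    fix j assume j: "j \<in> {1..<i}"
    show "n + i - 1 - (n + i - 1 - j) = j" using j by auto
    show "n + i - 1 - j \<in> {n..N+1}" using j N by auto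
  qed
  also have "\<dots> = (\<Sum>j\<in>{1..<i}. fps_hasse (i - 1 - j) (b_gf j)) $ n"
    by (simp add: fps_sum_nth fps_hasse_nth)
  finally show ?thesis .
qed

lemma b_gf_rec_nth:
  assumes i: "1 \<le> i" and n: "3 \<le> n + i"
  shows "b_gf i $ n = (\<Sum>j\<in>{1..<i}. fps_hasse (i - 1 - j) (b_gf j)) $ n + (\<Sum>j\<in>{1..i}. b_gf j * b_gf (i + 1 - j)) $ n"
proof -
  define N where "N = n + i - 3"
  have N: "N + 3 = n + i" using n by (simp add: N_def)
  have e: "n + i - 2 = Suc N" using n by (simp add: N_def)
  have "b_gf i $ n = of_int (coeff (P (Suc N)) n)" using b_gf_nth[of i n] i n e by simp
  also have "\<dots> = of_int (coeff (pcompose (P N) [:1,1:]) n) + (\<Sum>k\<le>N. of_int (coeff (P k * P (N - k)) n))"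
    by (simp add: coeff_sum)
  also have "(\<Sum>k\<le>N. of_int (coeff (P k * P (N - k)) n)) = (\<Sum>j\<in>{1..i}. b_gf j * b_gf (i + 1 - j)) $ n"
  proof -
    have "(\<Sum>k\<le>N. (of_int (coeff (P k * P (N - k)) n) :: real))
        = (\<Sum>k\<le>N. \<Sum>x\<le>n. of_int (coeff (P k) x) * of_int (coeff (P (N - k)) (n - x)))"
      by (simp add: coeff_mult)
    also have "\<dots> = (\<Sum>x\<le>n. \<Sum>k\<le>N. of_int (coeff (P k) x) * of_int (coeff (P (N - k)) (n - x)))"
      by (rule sum.swap)
    also have "\<dots> = (\<Sum>x\<le>n. \<Sum>j\<in>{1..i}. b_gf j $ x * b_gf (i + 1 - j) $ (n - x))"
      by (rule sum.cong[OF refl]) (rule P_convolution_coeff[OF i N], simp)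
    also have "\<dots> = (\<Sum>j\<in>{1..i}. \<Sum>x\<le>n. b_gf j $ x * b_gf (i + 1 - j) $ (n - x))"
      by (rule sum.swap)
    also have "\<dots> = (\<Sum>j\<in>{1..i}. b_gf j * b_gf (i + 1 - j)) $ n"
      by (simp add: fps_sum_nth fps_mult_nth atLeast0AtMost)
    finally show ?thesis .
  qed
  finally show ?thesis using coeff_P_shift[OF i N] by simp
qed

lemma b_gf_1_quadratic: "b_gf 1 = fps_X + b_gf 1 * b_gf 1"
proof (rule fps_ext)
  fix n
  show "b_gf 1 $ n = (fps_X + b_gf 1 * b_gf 1) $ n"
  proof (cases "n \<le> 1")
    case True
    then consider "n = 0" | "n = 1" by linarith
    then show ?thesis
    proof cases
      case 1 then show ?thesis by (simp add: b_gf_nth_eq_0 fps_mult_nth)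
    next
      case 2
      have "b_gf 1 $ 1 = 1" using b_gf_nth[of 1 1] by simp
      then show ?thesis using 2 by (simp add: b_gf_nth_eq_0 fps_mult_nth)
    qed
  next
    case False
    then have "b_gf 1 $ n = (\<Sum>j\<in>{1..<1}. fps_hasse (1 - 1 - j) (b_gf j)) $ n + (\<Sum>j\<in>{1..1}. b_gf j * b_gf (1 + 1 - j)) $ n"
      by (intro b_gf_rec_nth) auto
    then show ?thesis using False by simp
  qed
qed

lemma b_gf_rec:
  assumes i: "2 \<le> i"
  shows "b_gf i = (\<Sum>j\<in>{1..<i}. fps_hasse (i - 1 - j) (b_gf j)) + (\<Sum>j\<in>{1..i}. b_gf j * b_gf (i + 1 - j))"
proof (rule fps_ext)
  fix n
  show "b_gf i $ n = ((\<Sum>j\<in>{1..<i}. fps_hasse (i - 1 - j) (b_gf j)) + (\<Sum>j\<in>{1..i}. b_gf j * b_gf (i + 1 - j))) $ n"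
  proof (cases "3 \<le> n + i")
    case True then show ?thesis using b_gf_rec_nth[of i n] i by simp
  next
    case False
    then have n0: "n = 0" and i2: "i = 2" using i by auto
    have z: "b_gf j $ 0 = 0" if "j \<le> 2" for j
    proof (cases "j = 2")
      case True then show ?thesis using b_gf_nth[of 2 0] by simp
    next
      case False then show ?thesis using that by (simp add: b_gf_nth_eq_0)
    qed
    have s1: "{1..<2::nat} = {1}" by auto
    have s2: "{1..2::nat} = {1, 2}" by auto
    show ?thesis unfolding n0 i2 s1 s2 by (simp add: fps_mult_nth fps_hasse_nth z)
  qed
qed
lemma sum_split_ends:
  fixes i :: nat
  assumes "4 \<le> i"
  shows "(\<Sum>j\<in>{2..<i}. f j (i + 1 - j)) = f 2 (i - 1) + f (i - 1) 2 + (\<Sum>j\<in>{3..<i-1}. f j (i + 1 - j))"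
proof -
  have "{2..<i} = insert 2 (insert (i - 1) {3..<i-1})"
    using assms by auto
  moreover have "i + 1 - 2 = i - 1" "i + 1 - (i - 1) = 2"
    using assms by auto
  ultimately show ?thesis
    using assms by (simp add: add.assoc)
qed

lemma sqrt_pow_nth_0 [simp]: "sqrt_pow d $ 0 = 1"
  by (simp add: sqrt_pow_nth)

lemma sqrt_pow_1_squared: "sqrt_pow 1 * sqrt_pow 1 = 1 - 4 * fps_X"
  by (simp add: sqrt_pow_2 flip: sqrt_pow_add)

lemma two_b_gf_1: "2 * b_gf 1 = 1 - sqrt_pow 1"
proof -
  define w v where "w = 2 * b_gf 1" and "v = 1 - sqrt_pow 1"
  have "2 * w = 4 * fps_X + w * w"
    using arg_cong[OF b_gf_1_quadratic, of "\<lambda>x. 4 * x"] by (simp add: w_def algebra_simps)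
  moreover have "2 * v = 4 * fps_X + v * v"
    by (simp add: v_def algebra_simps sqrt_pow_1_squared)
  ultimately have "(w - v) * (2 - w - v) = 0"
    by (simp add: algebra_simps)
  moreover have "2 - w - v \<noteq> 0"
  proof
    assume "2 - w - v = 0"
    then have "(2 - w - v) $ 0 = 0"
      by simp
    then show False
      by (simp add: w_def v_def b_gf_nth_eq_0)
  qed
  ultimately have "w = v"
    by simp
  then show ?thesis
    by (simp add: w_def v_def)
qed

lemma fps_const_half_mult_2 [simp]: "fps_const (1/2) * (2 * f) = (f :: real fps)"
  by (simp add: numeral_fps_const mult.assoc[symmetric] del: fps_const_mult)

lemma b_gf_1: "b_gf 1 = fps_const (-1/2) * (sqrt_pow 1 - 1)"
proof -
  have "b_gf 1 = fps_const (1/2) * (1 - sqrt_pow 1)"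
    by (simp flip: two_b_gf_1)
  then show ?thesis
    by (simp add: algebra_simps fps_const_neg[symmetric] del: fps_const_neg)
qed

text \<open>The two outer terms \<open>b_gf 1 * b_gf i\<close> of the convolution combine with \<open>b_gf i\<close> to
  \<open>sqrt_pow 1 * b_gf i\<close>, removing \<open>b_gf i\<close> from the right-hand side.\<close>
lemma sqrt_pow_1_mult_b_gf:
  assumes "2 \<le> i"
  shows "sqrt_pow 1 * b_gf i
    = (\<Sum>j\<in>{1..<i}. fps_hasse (i - 1 - j) (b_gf j)) + (\<Sum>j\<in>{2..<i}. b_gf j * b_gf (i + 1 - j))"
proof -
  have "{1..i} = insert 1 (insert i {2..<i})"
    using assms by auto
  then have "(\<Sum>j\<in>{1..i}. b_gf j * b_gf (i + 1 - j))
      = 2 * b_gf 1 * b_gf i + (\<Sum>j\<in>{2..<i}. b_gf j * b_gf (i + 1 - j))"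
    using assms by (simp add: algebra_simps)
  also note two_b_gf_1
  finally show ?thesis
    using b_gf_rec[OF assms] by (simp add: algebra_simps)
qed

lemma b_gf_2: "b_gf 2 = fps_const (1/2) * (sqrt_pow (-1) - 1)"
proof -
  have "{1..<2::nat} = {1}"
    by auto
  then have "sqrt_pow 1 * b_gf 2 = b_gf 1"
    using sqrt_pow_1_mult_b_gf[of 2] by simp
  then have "b_gf 2 = sqrt_pow (-1) * b_gf 1"
    by (metis mult.assoc mult_1 sqrt_pow_uminus_mult)
  also have "\<dots> = fps_const (-1/2) * (sqrt_pow (-1) * sqrt_pow 1 - sqrt_pow (-1))"
    unfolding b_gf_1 by (simp add: algebra_simps)
  also have "\<dots> = fps_const (1/2) * (sqrt_pow (-1) - 1)"
    by (simp add: algebra_simps fps_const_neg[symmetric] del: fps_const_neg)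
  finally show ?thesis .
qed

lemma two_b_gf_2: "2 * b_gf 2 = sqrt_pow (-1) - 1"
  by (simp add: b_gf_2 numeral_fps_const mult.assoc[symmetric] del: fps_const_mult)

lemma b_gf_nth_Ints: "b_gf j $ n \<in> \<int>"
  by (simp add: b_gf_def)

lemma int_form_hasse_scaled_sqrt_pow:
  assumes f_Ints: "\<And>n. f $ n \<in> \<int>" and f: "f = fps_const c * (sqrt_pow e - 1)" and k: "1 \<le> k"
  shows "int_form (e - 2 * int k) (fps_hasse k f)"
proof -
  have hasse_f: "fps_hasse k f = fps_const (c * sqrt_pow e $ k) * sqrt_pow (e - 2 * int k)"
    using k by (simp add: f fps_hasse_const_mult fps_hasse_diff fps_hasse_sqrt_pow)
  \<comment> \<open>the constant is the coefficient of \<open>z^0\<close> in \<open>fps_hasse k f\<close>, which is \<open>f $ k\<close>\<close>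
  have "c * sqrt_pow e $ k = f $ k"
    using arg_cong[OF hasse_f, of "\<lambda>g. g $ 0"] by simp
  then have "c * sqrt_pow e $ k \<in> \<int>"
    using f_Ints by simp
  then show ?thesis
    unfolding hasse_f using int_form_sqrt_pow[of 1 "e - 2 * int k"]
    by (intro int_form_const_mult) simp_all
qed

lemma int_form_b_gf_3: "int_form (-3) (b_gf 3)"
proof -
  have "{1..<3::nat} = {1, 2}" "{2..<3::nat} = {2}"
    by auto
  then have rec: "sqrt_pow 1 * b_gf 3 = fps_hasse 1 (b_gf 1) + (b_gf 2 + b_gf 2 * b_gf 2)"
    using sqrt_pow_1_mult_b_gf[of 3] by simp
  have hasse_b_gf_1: "fps_hasse 1 (b_gf 1) = sqrt_pow (-1)"
    unfolding b_gf_1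
    by (simp add: fps_hasse_const_mult fps_hasse_diff fps_hasse_sqrt_pow sqrt_pow_nth mult.assoc[symmetric])
  have "sqrt_pow (-2) = sqrt_pow (-1) * sqrt_pow (-1)"
    by (simp flip: sqrt_pow_add)
  then have "b_gf 2 + b_gf 2 * b_gf 2 = fps_const (1/4) * (sqrt_pow (-2) - 1)"
    unfolding b_gf_2 by (simp add: numeral_fps_const algebra_simps)
  also have "sqrt_pow (-2) - 1 = 4 * (fps_X * sqrt_pow (-2))"
    using sqrt_pow_mult_uminus[of 2] by (simp add: sqrt_pow_2 algebra_simps)
  finally have "b_gf 2 + b_gf 2 * b_gf 2 = fps_X * sqrt_pow (-2)"
    by (simp add: numeral_fps_const mult.assoc[symmetric] del: fps_const_mult)
  then have "sqrt_pow 1 * b_gf 3 = sqrt_pow (-1) + fps_X * sqrt_pow (-2)"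
    unfolding rec hasse_b_gf_1 by simp
  then have "sqrt_pow (-1) * (sqrt_pow 1 * b_gf 3) = sqrt_pow (-1) * (sqrt_pow (-1) + fps_X * sqrt_pow (-2))"
    by simp
  then have "b_gf 3 = sqrt_pow (-2) + fps_X * sqrt_pow (-3)"
    by (simp add: algebra_simps mult.assoc[symmetric] flip: sqrt_pow_add)
  then show ?thesis
    by (intro int_formI[of "[:0, 1:]" 1]) (simp_all add: fps_of_poly_pCons)
qed

lemma int_form_hasse_b_gf_1_2:
  assumes "j = 1 \<or> j = 2" "1 \<le> k"
  shows "int_form (3 - 2 * int j - 2 * int k) (fps_hasse k (b_gf j))"
  using assms int_form_hasse_scaled_sqrt_pow[OF b_gf_nth_Ints b_gf_1]
    int_form_hasse_scaled_sqrt_pow[OF b_gf_nth_Ints b_gf_2] by auto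

lemma int_form_b_gf_2_mult:
  assumes "int_form d f"
  shows "int_form (d - 1) (b_gf 2 * f + f * b_gf 2)"
proof -
  have "int_form (-1) (sqrt_pow (-1) - 1)"
    by (rule int_formI[of 1 "[:-1:]"]) (simp_all add: fps_of_poly_pCons)
  from int_form_mult[OF this assms] have "int_form (d - 1) ((sqrt_pow (-1) - 1) * f)"
    by simp
  also have "(sqrt_pow (-1) - 1) * f = b_gf 2 * f + f * b_gf 2"
    by (simp only: two_b_gf_2[symmetric] mult_2 distrib_right mult.commute[of f])
  finally show ?thesis .
qed

lemma int_form_b_gf:
  assumes "3 \<le> i"
  shows "int_form (3 - 2 * int i) (b_gf i)"
  using assms
proof (induction i rule: less_induct)
  case (less i)
  consider "i = 3" | "4 \<le> i"
    using less.prems by linarith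
  then show ?case
  proof cases
    case 1
    then show ?thesis
      using int_form_b_gf_3 by simp
  next
    case 2
    have IH: "int_form (3 - 2 * int j) (b_gf j)" if "3 \<le> j" "j < i" for j
      using less.IH that by blast
    define d where "d = 4 - 2 * int i"
    have hasse_term: "int_form d (fps_hasse (i - 1 - j) (b_gf j))" if j: "j \<in> {1..<i}" for j
    proof -
      have "int_form (3 - 2 * int j - 2 * int (i - 1 - j)) (fps_hasse (i - 1 - j) (b_gf j))"
      proof (cases "j \<le> 2")
        case True
        then show ?thesis
          using j 2 by (intro int_form_hasse_b_gf_1_2) auto
      next
        case False
        then have "int_form (3 - 2 * int j) (b_gf j)"
          using j by (intro IH) auto
        then show ?thesis
          by (rule int_form_hasse)
      qed
      moreover have "d \<le> 3 - 2 * int j - 2 * int (i - 1 - j)"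
        using j by (simp add: d_def of_nat_diff)
      ultimately show ?thesis
        by (intro int_form_mono[of d])
    qed
    have product_term: "int_form d (b_gf j * b_gf (i + 1 - j))" if j: "j \<in> {3..<i-1}" for j
      using int_form_mult[OF IH[of j] IH[of "i + 1 - j"]] j by (auto simp: d_def of_nat_diff)
    have "int_form (3 - 2 * int (i - 1) - 1) (b_gf 2 * b_gf (i - 1) + b_gf (i - 1) * b_gf 2)"
      by (rule int_form_b_gf_2_mult, rule IH) (use 2 in auto)
    then have ends: "int_form d (b_gf 2 * b_gf (i - 1) + b_gf (i - 1) * b_gf 2)"
      using 2 by (simp add: d_def of_nat_diff)
    have "sqrt_pow 1 * b_gf i = (\<Sum>j\<in>{1..<i}. fps_hasse (i - 1 - j) (b_gf j))
        + ((b_gf 2 * b_gf (i - 1) + b_gf (i - 1) * b_gf 2) + (\<Sum>j\<in>{3..<i-1}. b_gf j * b_gf (i + 1 - j)))"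
      using sqrt_pow_1_mult_b_gf[of i] sum_split_ends[OF 2, of "\<lambda>j l. b_gf j * b_gf l"] 2
      by (simp add: add.assoc)
    then have "int_form d (sqrt_pow 1 * b_gf i)"
      by (simp only:) (rule int_form_add int_form_sum ends hasse_term product_term | assumption)+
    with int_form_sqrt_pow[of 1 "-1"] have "int_form (-1 + d) (sqrt_pow (-1) * (sqrt_pow 1 * b_gf i))"
      by (intro int_form_mult) simp_all
    then show ?thesis
      by (simp add: d_def mult.assoc[symmetric])
  qed
qed

section \<open>Polynomials in \<open>\<surd>(1-4z)\<close>\<close>

definition fps_eval_poly :: "real poly \<Rightarrow> real fps \<Rightarrow> real fps" where
  "fps_eval_poly R x = poly (map_poly fps_const R) x"

lemma fps_eval_poly_0 [simp]: "fps_eval_poly 0 x = 0"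
  by (simp add: fps_eval_poly_def)

lemma fps_eval_poly_pCons: "fps_eval_poly (pCons c p) x = fps_const c + x * fps_eval_poly p x"
  by (simp add: fps_eval_poly_def map_poly_pCons)

lemma fps_eval_poly_add: "fps_eval_poly (p + q) x = fps_eval_poly p x + fps_eval_poly q x"
proof -
  have "map_poly fps_const (p + q) = map_poly fps_const p + map_poly fps_const q"
    by (rule poly_eqI) (simp add: coeff_map_poly)
  then show ?thesis
    by (simp add: fps_eval_poly_def)
qed

lemma fps_eval_poly_diff: "fps_eval_poly (p - q) x = fps_eval_poly p x - fps_eval_poly q x"
proof -
  have "map_poly fps_const (p - q) = map_poly fps_const p - map_poly fps_const q"
    by (rule poly_eqI) (simp add: coeff_map_poly)
  then show ?thesis
    by (simp add: fps_eval_poly_def)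
qed

lemma fps_eval_poly_mult: "fps_eval_poly (p * q) x = fps_eval_poly p x * fps_eval_poly q x"
proof (induction p)
  case (pCons c p)
  have "map_poly fps_const (smult c q) = smult (fps_const c) (map_poly fps_const q)"
    by (rule poly_eqI) (simp add: coeff_map_poly)
  then have "fps_eval_poly (smult c q) x = fps_const c * fps_eval_poly q x"
    by (simp add: fps_eval_poly_def)
  then show ?case
    using pCons by (simp add: fps_eval_poly_pCons fps_eval_poly_add algebra_simps)
qed simp

lemma fps_eval_poly_sum: "fps_eval_poly (\<Sum>j\<in>A. f j) x = (\<Sum>j\<in>A. fps_eval_poly (f j) x)"
  by (induction A rule: infinite_finite_induct) (simp_all add: fps_eval_poly_add)

lemma fps_eval_poly_pcompose: "fps_eval_poly (pcompose p q) x = fps_eval_poly p (fps_eval_poly q x)"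
  by (induction p) (simp_all add: pcompose_pCons fps_eval_poly_add fps_eval_poly_mult fps_eval_poly_pCons)

lemma fps_eval_poly_fps_X: "fps_eval_poly p fps_X = fps_of_poly p"
  by (induction p) (simp_all add: fps_eval_poly_pCons fps_of_poly_pCons mult.commute)

lemma fps_eval_poly_altdef:
  assumes "degree p \<le> N"
  shows "fps_eval_poly p x = (\<Sum>c\<le>N. fps_const (coeff p c) * x ^ c)"
proof -
  have "fps_eval_poly p x = (\<Sum>c\<le>degree p. fps_const (coeff p c) * x ^ c)"
    by (simp add: fps_eval_poly_def poly_altdef degree_map_poly coeff_map_poly)
  also have "\<dots> = (\<Sum>c\<le>N. fps_const (coeff p c) * x ^ c)"
    by (rule sum.mono_neutral_left) (use assms in \<open>auto simp: coeff_eq_0\<close>)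
  finally show ?thesis .
qed

lemma fps_eval_poly_eq_fps_compose: "y $ 0 = 0 \<Longrightarrow> fps_eval_poly p y = fps_compose (fps_of_poly p) y"
  by (induction p)
    (simp_all add: fps_eval_poly_pCons fps_of_poly_pCons fps_compose_add_distrib fps_compose_mult_distrib
      mult.commute)

lemma fps_eval_poly_sqrt_pow_1_eq_0:
  assumes "fps_eval_poly V (sqrt_pow 1) = 0"
  shows "V = 0"
proof -
  define y where "y = sqrt_pow 1 - 1"
  have y0: "y $ 0 = 0"
    by (simp add: y_def)
  have "y $ 1 = -2"
    by (simp add: y_def sqrt_pow_nth)
  then have y_nz: "y \<noteq> 0"
    by auto
  define W where "W = pcompose V [:1, 1:]"
  have "fps_eval_poly [:1, 1:] y = sqrt_pow 1"
    by (simp add: fps_eval_poly_pCons y_def)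
  then have "fps_compose (fps_of_poly W) y = 0"
    using assms by (simp add: W_def fps_eval_poly_pcompose flip: fps_eval_poly_eq_fps_compose[OF y0])
  then have "W = 0"
    using fps_compose_eq_0_iff[OF y0] y_nz by simp
  moreover have "V = pcompose W [:-1, 1:]"
    by (simp add: W_def pcompose_assoc[symmetric] pcompose_pCons)
  ultimately show "V = 0"
    by simp
qed

text \<open>In the basis \<open>sqrt_pow (c + d)\<close>,
  \<open>c \<le> degree R\<close>, the Hasse derivatives act diagonally (\<open>fps_hasse_poly_in_sqrt\<close>), which turns
  the recurrence for the \<open>b_gf i\<close> into a recurrence for polynomials.\<close>
definition poly_in_sqrt :: "int \<Rightarrow> real poly \<Rightarrow> real fps" where
  "poly_in_sqrt d R = sqrt_pow d * fps_eval_poly R (sqrt_pow 1)"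

lemma poly_in_sqrt_inject:
  assumes "poly_in_sqrt d R = poly_in_sqrt d R'"
  shows "R = R'"
proof -
  have "sqrt_pow (- d) * poly_in_sqrt d R = sqrt_pow (- d) * poly_in_sqrt d R'"
    using assms by simp
  then have "fps_eval_poly (R - R') (sqrt_pow 1) = 0"
    by (simp add: poly_in_sqrt_def fps_eval_poly_diff mult.assoc[symmetric])
  then show ?thesis
    using fps_eval_poly_sqrt_pow_1_eq_0 by fastforce
qed

lemma poly_in_sqrt_add: "poly_in_sqrt d (R + R') = poly_in_sqrt d R + poly_in_sqrt d R'"
  by (simp add: poly_in_sqrt_def fps_eval_poly_add algebra_simps)

lemma poly_in_sqrt_sum: "poly_in_sqrt d (\<Sum>j\<in>A. f j) = (\<Sum>j\<in>A. poly_in_sqrt d (f j))"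
  by (simp add: poly_in_sqrt_def fps_eval_poly_sum sum_distrib_left)

lemma poly_in_sqrt_mult: "poly_in_sqrt (d + e) (R * R') = poly_in_sqrt d R * poly_in_sqrt e R'"
  by (simp add: poly_in_sqrt_def fps_eval_poly_mult sqrt_pow_add algebra_simps)

lemma poly_in_sqrt_const: "poly_in_sqrt d [:c:] = fps_const c * sqrt_pow d"
  by (simp add: poly_in_sqrt_def fps_eval_poly_pCons mult.commute)

lemma poly_in_sqrt_shift: "poly_in_sqrt d ([:0, 1:] * R) = poly_in_sqrt (d + 1) R"
  by (simp add: poly_in_sqrt_def fps_eval_poly_pCons sqrt_pow_add algebra_simps)

lemma sqrt_pow_1_mult_poly_in_sqrt: "sqrt_pow 1 * poly_in_sqrt d R = poly_in_sqrt (d + 1) R"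
  by (simp add: poly_in_sqrt_def sqrt_pow_add algebra_simps)

lemma poly_in_sqrt_altdef:
  assumes "degree R \<le> N"
  shows "poly_in_sqrt d R = (\<Sum>c\<le>N. fps_const (coeff R c) * sqrt_pow (int c + d))"
proof -
  have "sqrt_pow d * sqrt_pow 1 ^ c = sqrt_pow (int c + d)" for c
    by (induction c) (simp_all add: algebra_simps flip: sqrt_pow_add)
  then show ?thesis
    by (simp add: poly_in_sqrt_def fps_eval_poly_altdef[OF assms] sum_distrib_left
        mult.left_commute[of "sqrt_pow d"])
qed

definition hasse_scale :: "nat \<Rightarrow> int \<Rightarrow> real poly \<Rightarrow> real poly" where
  "hasse_scale k d R = (\<Sum>c\<le>degree R. monom (coeff R c * sqrt_pow (int c + d) $ k) c)"

lemma coeff_hasse_scale: "coeff (hasse_scale k d R) c = coeff R c * sqrt_pow (int c + d) $ k"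
  by (cases "c \<le> degree R") (simp_all add: hasse_scale_def coeff_sum coeff_monom coeff_eq_0)

lemma degree_hasse_scale_le: "degree (hasse_scale k d R) \<le> degree R"
  by (rule degree_le) (simp add: coeff_hasse_scale coeff_eq_0)

lemma fps_hasse_poly_in_sqrt:
  "fps_hasse k (poly_in_sqrt d R) = poly_in_sqrt (d - 2 * int k) (hasse_scale k d R)"
proof -
  have "fps_hasse k (poly_in_sqrt d R)
      = (\<Sum>c\<le>degree R. fps_const (coeff (hasse_scale k d R) c) * sqrt_pow (int c + d - 2 * int k))"
    by (simp add: poly_in_sqrt_altdef[OF order.refl] fps_hasse_sum fps_hasse_const_mult
        fps_hasse_sqrt_pow coeff_hasse_scale mult.assoc[symmetric])
  also have "\<dots> = (\<Sum>c\<le>degree R. fps_const (coeff (hasse_scale k d R) c) * sqrt_pow (int c + (d - 2 * int k)))"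
    by (simp only: add_diff_eq)
  also have "\<dots> = poly_in_sqrt (d - 2 * int k) (hasse_scale k d R)"
    by (rule poly_in_sqrt_altdef[symmetric]) (rule degree_hasse_scale_le)
  finally show ?thesis .
qed

text \<open>As \<open>z = (1 - s\<^sup>2) / 4\<close> for \<open>s = sqrt_pow 1\<close>, the series \<open>S(z) + s Q(z)\<close> is the polynomial
  \<open>poly_of_parts S Q\<close> in \<open>s\<close>; its even and odd parts are \<open>S\<close> and \<open>Q\<close> up to a linear change of variable.\<close>
definition poly_of_parts :: "real poly \<Rightarrow> real poly \<Rightarrow> real poly" where
  "poly_of_parts S Q = pcompose S [:1/4, 0, -1/4:] + [:0, 1:] * pcompose Q [:1/4, 0, -1/4:]"

lemma poly_in_sqrt_poly_of_parts:
  "poly_in_sqrt d (poly_of_parts S Q) = fps_of_poly S * sqrt_pow d + fps_of_poly Q * sqrt_pow (d + 1)"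
proof -
  have "fps_eval_poly [:1/4, 0, -1/4:] (sqrt_pow 1) = fps_const (1/4) * (1 - sqrt_pow 1 * sqrt_pow 1)"
    by (simp add: fps_eval_poly_pCons algebra_simps fps_const_neg[symmetric] del: fps_const_neg)
  also have "\<dots> = fps_X"
    by (simp add: sqrt_pow_1_squared numeral_fps_const mult.assoc[symmetric] del: fps_const_mult)
  finally have "fps_eval_poly [:1/4, 0, -1/4:] (sqrt_pow 1) = fps_X" .
  then show ?thesis
    by (simp add: poly_in_sqrt_def poly_of_parts_def fps_eval_poly_add fps_eval_poly_pCons
        fps_eval_poly_pcompose fps_eval_poly_fps_X sqrt_pow_add algebra_simps)
qed

lemma coeff_pcompose_X_squared:
  fixes p :: "'a::comm_semiring_1 poly"
  shows "coeff (pcompose p [:0, 0, 1:]) n = (if even n then coeff p (n div 2) else 0)"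
proof (induction p arbitrary: n)
  case (pCons c p)
  have "pcompose (pCons c p) [:0, 0, 1:] = pCons c (pCons 0 (pcompose p [:0, 0, 1:]))"
    by (simp add: pcompose_pCons)
  moreover have "n = 0 \<or> n = 1 \<or> (\<exists>k. n = Suc (Suc k))"
    by presburger
  ultimately show ?case
    using pCons.IH by auto
qed simp

lemma coeff_poly_of_parts: "coeff (poly_of_parts S Q) n =
   (if even n then coeff (pcompose S [:1/4, -1/4:]) (n div 2) else coeff (pcompose Q [:1/4, -1/4:]) (n div 2))"
proof -
  have "[:1/4, 0, -1/4:] = pcompose [:1/4, -1/4:] [:0, 0, 1::real:]"
    by (simp add: pcompose_pCons)
  then have "poly_of_parts S Q = pcompose (pcompose S [:1/4, -1/4:]) [:0, 0, 1:]
      + pCons 0 (pcompose (pcompose Q [:1/4, -1/4:]) [:0, 0, 1:])"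
    by (simp add: poly_of_parts_def pcompose_assoc)
  then show ?thesis
    by (cases n) (auto simp: coeff_pcompose_X_squared simp del: coeff_pcompose_0 elim: oddE evenE)
qed

lemma degree_pcompose_quarter: "degree (pcompose S [:1/4, -1/4 :: real:]) = degree S"
  by (simp add: degree_pcompose)

text \<open>For \<open>i \<ge> 2\<close> such an \<open>R\<close> exists by \<open>int_form_b_gf\<close> (and \<open>b_gf_2\<close>) and is unique by
  \<open>poly_in_sqrt_inject\<close>.\<close>
definition b_poly :: "nat \<Rightarrow> real poly" where
  "b_poly i = (SOME R. poly_in_sqrt (3 - 2 * int i) R = b_gf i)"

lemma poly_in_sqrt_b_poly_2: "poly_in_sqrt (-1) [:1/2, -1/2:] = b_gf 2"
proof -
  have "poly_in_sqrt (-1) [:1/2, -1/2:] = fps_const (1/2) * (sqrt_pow (-1) - sqrt_pow (-1) * sqrt_pow 1)"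
    by (simp add: poly_in_sqrt_def fps_eval_poly_pCons algebra_simps fps_const_neg[symmetric] del: fps_const_neg)
  then show ?thesis
    by (simp add: b_gf_2)
qed

lemma poly_in_sqrt_b_poly:
  assumes "2 \<le> i"
  shows "poly_in_sqrt (3 - 2 * int i) (b_poly i) = b_gf i"
proof -
  have "\<exists>R. poly_in_sqrt (3 - 2 * int i) R = b_gf i"
  proof (cases "i = 2")
    case True
    then show ?thesis
      using poly_in_sqrt_b_poly_2 by auto
  next
    case False
    then have "int_form (3 - 2 * int i) (b_gf i)"
      using assms by (intro int_form_b_gf) simp
    then obtain S Q where "b_gf i = fps_of_poly S * sqrt_pow (3 - 2 * int i) + fps_of_poly Q * sqrt_pow (3 - 2 * int i + 1)"
      by (elim int_formE)
    then show ?thesis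
      using poly_in_sqrt_poly_of_parts[of "3 - 2 * int i" S Q] by metis
  qed
  then show ?thesis
    unfolding b_poly_def by (rule someI_ex)
qed

lemma b_poly_2: "b_poly 2 = [:1/2, -1/2:]"
  using poly_in_sqrt_b_poly[of 2] poly_in_sqrt_b_poly_2 by (intro poly_in_sqrt_inject[of "-1"]) simp

lemma b_poly_eq_poly_of_parts:
  assumes "3 \<le> i"
  obtains S Q where "int_poly S" "int_poly Q" "b_poly i = poly_of_parts S Q"
    "b_gf i = fps_of_poly S * sqrt_pow (3 - 2 * int i) + fps_of_poly Q * sqrt_pow (4 - 2 * int i)"
proof -
  obtain S Q where SQ: "int_poly S" "int_poly Q"
    and b: "b_gf i = fps_of_poly S * sqrt_pow (3 - 2 * int i) + fps_of_poly Q * sqrt_pow (3 - 2 * int i + 1)"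
    using int_form_b_gf[OF assms] by (elim int_formE)
  have "b_poly i = poly_of_parts S Q"
    using poly_in_sqrt_b_poly[of i] assms b
    by (intro poly_in_sqrt_inject[of "3 - 2 * int i"]) (simp add: poly_in_sqrt_poly_of_parts)
  then show ?thesis
    using that SQ b by simp
qed

lemma b_poly_rec:
  assumes i: "3 \<le> i"
  shows "b_poly i = [:0, 1:] * ([:- sqrt_pow 1 $ (i - 2) / 2:]
                      + (\<Sum>j\<in>{2..<i}. hasse_scale (i - 1 - j) (3 - 2 * int j) (b_poly j)))
                  + (\<Sum>j\<in>{2..<i}. b_poly j * b_poly (i + 1 - j))"
proof (rule poly_in_sqrt_inject[of "4 - 2 * int i"])
  have hasse_1: "poly_in_sqrt (5 - 2 * int i) [:- sqrt_pow 1 $ (i - 2) / 2:] = fps_hasse (i - 2) (b_gf 1)"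
  proof -
    have "1 - 2 * int (i - 2) = 5 - 2 * int i"
      using i by simp
    then show ?thesis
      unfolding b_gf_1 using i by (simp add: poly_in_sqrt_const fps_hasse_const_mult fps_hasse_diff fps_hasse_sqrt_pow)
  qed
  have hasse_j: "poly_in_sqrt (5 - 2 * int i) (hasse_scale (i - 1 - j) (3 - 2 * int j) (b_poly j))
      = fps_hasse (i - 1 - j) (b_gf j)" if j: "j \<in> {2..<i}" for j
  proof -
    have "3 - 2 * int j - 2 * int (i - 1 - j) = 5 - 2 * int i"
      using j by (simp add: of_nat_diff)
    then show ?thesis
      using j by (simp flip: poly_in_sqrt_b_poly add: fps_hasse_poly_in_sqrt)
  qed
  have product_j: "poly_in_sqrt (4 - 2 * int i) (b_poly j * b_poly (i + 1 - j)) = b_gf j * b_gf (i + 1 - j)"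
    if j: "j \<in> {2..<i}" for j
  proof -
    have "4 - 2 * int i = (3 - 2 * int j) + (3 - 2 * int (i + 1 - j))"
      using j by (simp add: of_nat_diff)
    moreover have "poly_in_sqrt (3 - 2 * int j) (b_poly j) = b_gf j"
      using j by (simp add: poly_in_sqrt_b_poly)
    moreover have "poly_in_sqrt (3 - 2 * int (i + 1 - j)) (b_poly (i + 1 - j)) = b_gf (i + 1 - j)"
      by (rule poly_in_sqrt_b_poly) (use j in auto)
    ultimately show ?thesis
      by (simp only: poly_in_sqrt_mult)
  qed
  have "{1..<i} = insert 1 {2..<i}"
    using i by auto
  then have "sqrt_pow 1 * b_gf i = fps_hasse (i - 2) (b_gf 1)
      + (\<Sum>j\<in>{2..<i}. fps_hasse (i - 1 - j) (b_gf j)) + (\<Sum>j\<in>{2..<i}. b_gf j * b_gf (i + 1 - j))"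
    using sqrt_pow_1_mult_b_gf[of i] i by (simp add: numeral_2_eq_2)
  also have "\<dots> = poly_in_sqrt (4 - 2 * int i) ([:0, 1:] * ([:- sqrt_pow 1 $ (i - 2) / 2:]
                      + (\<Sum>j\<in>{2..<i}. hasse_scale (i - 1 - j) (3 - 2 * int j) (b_poly j)))
                  + (\<Sum>j\<in>{2..<i}. b_poly j * b_poly (i + 1 - j)))"
  proof -
    have "4 - 2 * int i + 1 = 5 - 2 * int i"
      by simp
    then have "poly_in_sqrt (4 - 2 * int i) ([:0, 1:] * ([:- sqrt_pow 1 $ (i - 2) / 2:]
                      + (\<Sum>j\<in>{2..<i}. hasse_scale (i - 1 - j) (3 - 2 * int j) (b_poly j)))
                  + (\<Sum>j\<in>{2..<i}. b_poly j * b_poly (i + 1 - j)))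
        = poly_in_sqrt (5 - 2 * int i) [:- sqrt_pow 1 $ (i - 2) / 2:]
          + (\<Sum>j\<in>{2..<i}. poly_in_sqrt (5 - 2 * int i) (hasse_scale (i - 1 - j) (3 - 2 * int j) (b_poly j)))
          + (\<Sum>j\<in>{2..<i}. poly_in_sqrt (4 - 2 * int i) (b_poly j * b_poly (i + 1 - j)))"
      by (simp only: poly_in_sqrt_add poly_in_sqrt_shift poly_in_sqrt_sum)
    then show ?thesis
      using hasse_1 hasse_j product_j by simp
  qed
  finally show "poly_in_sqrt (4 - 2 * int i) (b_poly i) = \<dots>"
    using poly_in_sqrt_b_poly[of i] i sqrt_pow_1_mult_poly_in_sqrt[of "3 - 2 * int i" "b_poly i"] by simp
qed

section \<open>Signs of the top coefficients\<close>

text \<open>The three highest possible coefficients of \<open>b_poly i\<close>, whose degree is at most \<open>i - 1\<close>.\<close>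
definition top_coeff :: "nat \<Rightarrow> nat \<Rightarrow> real" where
  "top_coeff k i = coeff (b_poly i) (i - k)"

lemma coeff_mult_high:
  fixes p q :: "'a::comm_semiring_0 poly"
  assumes p: "degree p \<le> m" and q: "degree q \<le> n" and r: "r \<le> m" "r \<le> n"
  shows "coeff (p * q) (m + n - r) = (\<Sum>x\<in>{m - r..m}. coeff p x * coeff q (m + n - r - x))"
  unfolding coeff_mult
proof (rule sum.mono_neutral_right)
  show "\<forall>x\<in>{..m + n - r} - {m - r..m}. coeff p x * coeff q (m + n - r - x) = 0"
  proof
    fix x assume "x \<in> {..m + n - r} - {m - r..m}"
    then have "x > m \<or> m + n - r - x > n"
      using r by auto
    then show "coeff p x * coeff q (m + n - r - x) = 0"
      using p q by (auto simp: coeff_eq_0)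
  qed
qed (use r in auto)

lemma coeff_mult_high_0:
  fixes p q :: "'a::comm_semiring_0 poly"
  assumes "degree p \<le> m" "degree q \<le> n"
  shows "coeff (p * q) (m + n) = coeff p m * coeff q n"
  using coeff_mult_high[OF assms, of 0] by simp

lemma coeff_mult_high_1:
  fixes p q :: "'a::comm_semiring_0 poly"
  assumes "degree p \<le> m" "degree q \<le> n" "1 \<le> m" "1 \<le> n"
  shows "coeff (p * q) (m + n - 1) = coeff p m * coeff q (n - 1) + coeff p (m - 1) * coeff q n"
proof -
  have "{m - 1..m} = {m, m - 1}" "m \<noteq> m - 1"
    using assms(3) by auto
  then show ?thesis
    using coeff_mult_high[OF assms(1,2), of 1] assms(3,4) by (simp add: add.commute)
qed

lemma coeff_mult_high_2:
  fixes p q :: "'a::comm_semiring_0 poly"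
  assumes "degree p \<le> m" "degree q \<le> n" "2 \<le> m" "2 \<le> n"
  shows "coeff (p * q) (m + n - 2)
    = coeff p m * coeff q (n - 2) + coeff p (m - 1) * coeff q (n - 1) + coeff p (m - 2) * coeff q n"
proof -
  have "{m - 2..m} = {m, m - 1, m - 2}" "m \<noteq> m - 1" "m \<noteq> m - 2" "m - 1 \<noteq> m - 2"
    using assms(3) by auto
  moreover have "m + n - 2 - m = n - 2" "m + n - 2 - (m - 1) = n - 1" "m + n - 2 - (m - 2) = n"
    "m + n - Suc (Suc (m - 2)) = n"
    using assms by auto
  ultimately show ?thesis
    using coeff_mult_high[OF assms(1,2), of 2] assms(3,4) by (simp add: algebra_simps)
qed

lemma sqrt_pow_nth_1: "sqrt_pow d $ 1 = - 2 * of_int d" "sqrt_pow d $ Suc 0 = - 2 * of_int d"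
  by (simp_all add: sqrt_pow_nth)

lemma sqrt_pow_nth_2: "sqrt_pow d $ 2 = 2 * of_int d * (of_int d - 2)"
proof -
  have "(of_int d / 2 :: real) gchoose 2 = of_int d / 2 * (of_int d / 2 - 1) / 2"
    by (simp add: gbinomial_prod_rev numeral_2_eq_2 lessThan_Suc)
  then show ?thesis
    by (simp add: sqrt_pow_nth field_simps)
qed

lemma hasse_scale_0: "hasse_scale 0 d R = R"
  by (simp add: hasse_scale_def poly_as_sum_of_monoms)

lemma b_poly_3: "b_poly 3 = [:1/4, 1, -1/4:]"
proof -
  have "{2..<3::nat} = {2}"
    by auto
  then show ?thesis
    using b_poly_rec[of 3] by (simp add: b_poly_2 hasse_scale_0 sqrt_pow_nth_1)
qed

lemma coeff_1_minus_X_mult: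
  "coeff ([:1, -1:] * (F :: real poly)) n = coeff F n - (if n = 0 then 0 else coeff F (n - 1))"
  by (cases n) (simp_all add: coeff_pCons)

definition hasse_part :: "nat \<Rightarrow> real poly" where
  "hasse_part i = [:(- sqrt_pow 1 $ (i - 2) / 2):] + (\<Sum>j\<in>{2..<i}. hasse_scale (i - 1 - j) (3 - 2 * int j) (b_poly j))"
definition product_part :: "nat \<Rightarrow> real poly" where
  "product_part i = (\<Sum>j\<in>{3..<i-1}. b_poly j * b_poly (i + 1 - j))"

lemma b_poly_decomp:
  assumes i: "4 \<le> i"
  shows "b_poly i = pCons 0 (hasse_part i) + [:1, -1:] * b_poly (i - 1) + product_part i"
proof -
  have "b_poly 2 + b_poly 2 = [:1, -1:]"
    by (simp add: b_poly_2)
  then have "b_poly 2 * b_poly (i - 1) + b_poly (i - 1) * b_poly 2 = [:1, -1:] * b_poly (i - 1)"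
    by (simp only: mult.commute[of "b_poly (i - 1)"] flip: distrib_right)
  then show ?thesis
    using b_poly_rec[of i] sum_split_ends[OF i, of "\<lambda>j l. b_poly j * b_poly l"] i
    by (simp add: hasse_part_def product_part_def)
qed

lemma degree_hasse_part_le:
  assumes i: "4 \<le> i" and deg: "\<And>j. 2 \<le> j \<Longrightarrow> j < i \<Longrightarrow> degree (b_poly j) \<le> j - 1"
  shows "degree (hasse_part i) \<le> i - 2"
proof -
  have "degree (\<Sum>j\<in>{2..<i}. hasse_scale (i - 1 - j) (3 - 2 * int j) (b_poly j)) \<le> i - 2"
  proof (rule degree_sum_le)
    fix j assume j: "j \<in> {2..<i}"
    have "degree (hasse_scale (i - 1 - j) (3 - 2 * int j) (b_poly j)) \<le> degree (b_poly j)"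
      by (rule degree_hasse_scale_le)
    also have "\<dots> \<le> j - 1" using deg j by auto
    also have "\<dots> \<le> i - 2" using j by auto
    finally show "degree (hasse_scale (i - 1 - j) (3 - 2 * int j) (b_poly j)) \<le> i - 2" .
  qed simp
  then show ?thesis unfolding hasse_part_def using degree_add_le[of "[:(- sqrt_pow 1 $ (i - 2) / 2):]" "i - 2"] by simp
qed

lemma degree_product_part_le:
  assumes i: "4 \<le> i" and deg: "\<And>j. 2 \<le> j \<Longrightarrow> j < i \<Longrightarrow> degree (b_poly j) \<le> j - 1"
  shows "degree (product_part i) \<le> i - 1"
  unfolding product_part_def
proof (rule degree_sum_le)
  fix j assume j: "j \<in> {3..<i-1}"
  have "degree (b_poly j * b_poly (i + 1 - j)) \<le> degree (b_poly j) + degree (b_poly (i + 1 - j))"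
    by (rule degree_mult_le)
  also have "\<dots> \<le> (j - 1) + (i + 1 - j - 1)"
    using deg[of j] deg[of "i + 1 - j"] j by (intro add_mono) auto
  also have "\<dots> = i - 1" using j by auto
  finally show "degree (b_poly j * b_poly (i + 1 - j)) \<le> i - 1" .
qed simp

lemma degree_b_poly_le_step:
  assumes i: "4 \<le> i" and deg: "\<And>j. 2 \<le> j \<Longrightarrow> j < i \<Longrightarrow> degree (b_poly j) \<le> j - 1"
  shows "degree (b_poly i) \<le> i - 1"
proof -
  have d1: "degree (pCons 0 (hasse_part i)) \<le> i - 1"
    using degree_hasse_part_le[OF i deg] i by (cases "hasse_part i = 0") auto
  have m: "degree ([:1, -1:] * b_poly (i - 1)) \<le> degree [:1, -1::real:] + degree (b_poly (i - 1))"
    by (rule degree_mult_le)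
  have m1: "degree [:1, -1::real:] = 1" by simp
  have m2: "degree (b_poly (i - 1)) \<le> i - 1 - 1" using deg[of "i - 1"] i by simp
  have d2: "degree ([:1, -1:] * b_poly (i - 1)) \<le> i - 1" using m m1 m2 i by arith
  have d3: "degree (product_part i) \<le> i - 1" by (rule degree_product_part_le[OF i deg])
  show ?thesis unfolding b_poly_decomp[OF i]
    by (intro degree_add_le d1 d2 d3)
qed

lemma coeff_hasse_part: "coeff (hasse_part i) m = (if m = 0 then (- sqrt_pow 1 $ (i - 2) / 2) else 0)
    + (\<Sum>j\<in>{2..<i}. coeff (b_poly j) m * sqrt_pow (int m + (3 - 2 * int j)) $ (i - 1 - j))"
  by (cases m) (simp_all add: hasse_part_def coeff_sum coeff_hasse_scale)

lemma coeff_product_part_high: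
  assumes i: "4 \<le> i" and deg: "\<And>j. 2 \<le> j \<Longrightarrow> j < i \<Longrightarrow> degree (b_poly j) \<le> j - 1"
  shows "coeff (product_part i) (i - 1) = (\<Sum>j\<in>{3..<i-1}. top_coeff 1 j * top_coeff 1 (i + 1 - j))"
    and "coeff (product_part i) (i - 2) = (\<Sum>j\<in>{3..<i-1}. top_coeff 1 j * top_coeff 2 (i + 1 - j) + top_coeff 2 j * top_coeff 1 (i + 1 - j))"
    and "coeff (product_part i) (i - 3) = (\<Sum>j\<in>{3..<i-1}. top_coeff 1 j * top_coeff 3 (i + 1 - j) + top_coeff 2 j * top_coeff 2 (i + 1 - j) + top_coeff 3 j * top_coeff 1 (i + 1 - j))"
proof -
  have facts: "degree (b_poly j) \<le> j - 1" "degree (b_poly (i + 1 - j)) \<le> i - j" "2 \<le> j - 1" "2 \<le> i - j"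
    "(j - 1) + (i - j) = i - 1" "i + 1 - j - 1 = i - j" "i + 1 - j - 2 = i - j - 1" "i + 1 - j - 3 = i - j - 2"
    if j: "j \<in> {3..<i-1}" for j
    using j deg[of j] deg[of "i + 1 - j"] by auto
  show "coeff (product_part i) (i - 1) = (\<Sum>j\<in>{3..<i-1}. top_coeff 1 j * top_coeff 1 (i + 1 - j))"
    unfolding product_part_def coeff_sum
  proof (rule sum.cong[OF refl])
    fix j assume j: "j \<in> {3..<i-1}"
    have "coeff (b_poly j * b_poly (i + 1 - j)) ((j - 1) + (i - j)) = coeff (b_poly j) (j - 1) * coeff (b_poly (i + 1 - j)) (i - j)"
      by (rule coeff_mult_high_0) (use facts[OF j] in auto)
    then show "coeff (b_poly j * b_poly (i + 1 - j)) (i - 1) = top_coeff 1 j * top_coeff 1 (i + 1 - j)"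
      using facts[OF j] by (simp add: top_coeff_def)
  qed
  show "coeff (product_part i) (i - 2) = (\<Sum>j\<in>{3..<i-1}. top_coeff 1 j * top_coeff 2 (i + 1 - j) + top_coeff 2 j * top_coeff 1 (i + 1 - j))"
    unfolding product_part_def coeff_sum
  proof (rule sum.cong[OF refl])
    fix j assume j: "j \<in> {3..<i-1}"
    have "coeff (b_poly j * b_poly (i + 1 - j)) ((j - 1) + (i - j) - 1) = coeff (b_poly j) (j - 1) * coeff (b_poly (i + 1 - j)) (i - j - 1)
        + coeff (b_poly j) (j - 1 - 1) * coeff (b_poly (i + 1 - j)) (i - j)"
      by (rule coeff_mult_high_1) (use facts[OF j] in auto)
    moreover have "(j - 1) + (i - j) - 1 = i - 2" "j - 1 - 1 = j - 2" using j by auto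
    ultimately show "coeff (b_poly j * b_poly (i + 1 - j)) (i - 2) = top_coeff 1 j * top_coeff 2 (i + 1 - j) + top_coeff 2 j * top_coeff 1 (i + 1 - j)"
      using facts[OF j] by (simp add: top_coeff_def)
  qed
  show "coeff (product_part i) (i - 3) = (\<Sum>j\<in>{3..<i-1}. top_coeff 1 j * top_coeff 3 (i + 1 - j) + top_coeff 2 j * top_coeff 2 (i + 1 - j) + top_coeff 3 j * top_coeff 1 (i + 1 - j))"
    unfolding product_part_def coeff_sum
  proof (rule sum.cong[OF refl])
    fix j assume j: "j \<in> {3..<i-1}"
    have "coeff (b_poly j * b_poly (i + 1 - j)) ((j - 1) + (i - j) - 2) = coeff (b_poly j) (j - 1) * coeff (b_poly (i + 1 - j)) (i - j - 2)
        + coeff (b_poly j) (j - 1 - 1) * coeff (b_poly (i + 1 - j)) (i - j - 1) + coeff (b_poly j) (j - 1 - 2) * coeff (b_poly (i + 1 - j)) (i - j)"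
      by (rule coeff_mult_high_2) (use facts[OF j] in auto)
    moreover have "(j - 1) + (i - j) - 2 = i - 3" "j - 1 - 1 = j - 2" "j - 1 - 2 = j - 3"
      using j by auto
    ultimately show "coeff (b_poly j * b_poly (i + 1 - j)) (i - 3) = top_coeff 1 j * top_coeff 3 (i + 1 - j) + top_coeff 2 j * top_coeff 2 (i + 1 - j) + top_coeff 3 j * top_coeff 1 (i + 1 - j)"
      using facts[OF j] by (simp add: top_coeff_def)
  qed
qed

lemma coeff_b_poly_decomp:
  assumes i: "4 \<le> i" and n: "1 \<le> n"
  shows "coeff (b_poly i) n = coeff (hasse_part i) (n - 1) + (coeff (b_poly (i - 1)) n - coeff (b_poly (i - 1)) (n - 1)) + coeff (product_part i) n"
proof -
  have "coeff (pCons 0 (hasse_part i)) n = coeff (hasse_part i) (n - 1)" using n by (cases n) auto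
  then show ?thesis unfolding b_poly_decomp[OF i] coeff_add coeff_1_minus_X_mult using n by simp
qed

lemma coeff_hasse_part_1:
  assumes i: "4 \<le> i" and deg: "\<And>j. 2 \<le> j \<Longrightarrow> j < i \<Longrightarrow> degree (b_poly j) \<le> j - 1"
  shows "coeff (hasse_part i) (i - 2) = top_coeff 1 (i - 1)"
proof -
  define g where "g j = coeff (b_poly j) (i - 2) * sqrt_pow (int (i - 2) + (3 - 2 * int j)) $ (i - 1 - j)" for j
  have "(\<Sum>j\<in>{2..<i}. g j) = (\<Sum>j\<in>{i - 1}. g j)"
  proof (rule sum.mono_neutral_right)
    show "\<forall>j\<in>{2..<i} - {i - 1}. g j = 0"
    proof
      fix j assume j: "j \<in> {2..<i} - {i - 1}"
      then have "degree (b_poly j) < i - 2" using deg[of j] by auto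
      then show "g j = 0" by (simp add: g_def coeff_eq_0)
    qed
  qed (use i in auto)
  moreover have "g (i - 1) = top_coeff 1 (i - 1)"
  proof -
    have e: "i - 1 - (i - 1) = 0" "i - 1 - 1 = i - 2" by auto
    show ?thesis unfolding g_def top_coeff_def e by (simp add: sqrt_pow_nth_0)
  qed
  ultimately show ?thesis using i unfolding coeff_hasse_part g_def by simp
qed

lemma coeff_hasse_part_2:
  assumes i: "4 \<le> i" and deg: "\<And>j. 2 \<le> j \<Longrightarrow> j < i \<Longrightarrow> degree (b_poly j) \<le> j - 1"
  shows "coeff (hasse_part i) (i - 3) = top_coeff 2 (i - 1) + 2 * (real i - 4) * top_coeff 1 (i - 2)"
proof -
  define g where "g j = coeff (b_poly j) (i - 3) * sqrt_pow (int (i - 3) + (3 - 2 * int j)) $ (i - 1 - j)" for j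
  have "(\<Sum>j\<in>{2..<i}. g j) = (\<Sum>j\<in>{i - 2, i - 1}. g j)"
  proof (rule sum.mono_neutral_right)
    show "\<forall>j\<in>{2..<i} - {i - 2, i - 1}. g j = 0"
    proof
      fix j assume j: "j \<in> {2..<i} - {i - 2, i - 1}"
      then have "degree (b_poly j) < i - 3" using deg[of j] by auto
      then show "g j = 0" by (simp add: g_def coeff_eq_0)
    qed
  qed (use i in auto)
  moreover have "(\<Sum>j\<in>{i - 2, i - 1}. g j) = g (i - 2) + g (i - 1)" using i by simp
  moreover have "g (i - 1) = top_coeff 2 (i - 1)"
  proof -
    have e: "i - 1 - (i - 1) = 0" "i - 1 - 2 = i - 3" by auto
    show ?thesis unfolding g_def top_coeff_def e by (simp add: sqrt_pow_nth_0)
  qed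
  moreover have "g (i - 2) = 2 * (real i - 4) * top_coeff 1 (i - 2)"
  proof -
    have e: "i - 1 - (i - 2) = 1" "i - 2 - 1 = i - 3" using i by auto
    have "sqrt_pow (int (i - 3) + (3 - 2 * int (i - 2))) $ 1 = 2 * (real i - 4)"
      using i by (simp add: sqrt_pow_nth_1 sqrt_pow_nth_1 of_nat_diff)
    then show ?thesis unfolding g_def top_coeff_def e by simp
  qed
  ultimately show ?thesis using i unfolding coeff_hasse_part g_def by simp
qed

lemma coeff_hasse_part_3:
  assumes i: "4 \<le> i" and deg: "\<And>j. 2 \<le> j \<Longrightarrow> j < i \<Longrightarrow> degree (b_poly j) \<le> j - 1"
  shows "coeff (hasse_part i) (i - 4) = (if i = 4 then 1 else 2 * (real i - 5) * (real i - 3) * top_coeff 1 (i - 3))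
       + top_coeff 3 (i - 1) + 2 * (real i - 3) * top_coeff 2 (i - 2)"
proof -
  define g where "g j = coeff (b_poly j) (i - 4) * sqrt_pow (int (i - 4) + (3 - 2 * int j)) $ (i - 1 - j)" for j
  have g1: "g (i - 1) = top_coeff 3 (i - 1)"
  proof -
    have e: "i - 1 - (i - 1) = 0" "i - 1 - 3 = i - 4" by auto
    show ?thesis unfolding g_def top_coeff_def e by (simp add: sqrt_pow_nth_0)
  qed
  have g2: "g (i - 2) = 2 * (real i - 3) * top_coeff 2 (i - 2)"
  proof -
    have e: "i - 1 - (i - 2) = 1" "i - 2 - 2 = i - 4" using i by auto
    have "sqrt_pow (int (i - 4) + (3 - 2 * int (i - 2))) $ 1 = 2 * (real i - 3)"
      using i by (simp add: sqrt_pow_nth_1 sqrt_pow_nth_1 of_nat_diff)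
    then show ?thesis unfolding g_def top_coeff_def e by simp
  qed
  show ?thesis
  proof (cases "i = 4")
    case True
    have s: "{2..<4::nat} = {2, 3}" by auto
    have "coeff (hasse_part 4) 0 = 1 + (coeff (b_poly 2) 0 * sqrt_pow (int 0 + (-1)) $ (Suc 0) + coeff (b_poly 3) 0 * sqrt_pow (int 0 + (-3)) $ 0)"
      unfolding coeff_hasse_part s by (simp add: sqrt_pow_nth_2)
    moreover have "sqrt_pow (int 0 + (-1)) $ (Suc 0) = 2" by (simp add: sqrt_pow_nth_1)
    moreover have "top_coeff 3 3 = coeff (b_poly 3) 0" "top_coeff 2 2 = coeff (b_poly 2) 0"
      by (simp_all add: top_coeff_def)
    ultimately show ?thesis using True by (simp add: sqrt_pow_nth_0)
  next
    case False
    then have i5: "5 \<le> i" using i by simp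
    have "(\<Sum>j\<in>{2..<i}. g j) = (\<Sum>j\<in>{i - 3, i - 2, i - 1}. g j)"
    proof (rule sum.mono_neutral_right)
      show "\<forall>j\<in>{2..<i} - {i - 3, i - 2, i - 1}. g j = 0"
      proof
        fix j assume j: "j \<in> {2..<i} - {i - 3, i - 2, i - 1}"
        then have "degree (b_poly j) < i - 4" using deg[of j] by auto
        then show "g j = 0" by (simp add: g_def coeff_eq_0)
      qed
    qed (use i5 in auto)
    moreover have "(\<Sum>j\<in>{i - 3, i - 2, i - 1}. g j) = g (i - 3) + g (i - 2) + g (i - 1)"
    proof -
      have d: "i - 3 \<noteq> i - 2" "i - 3 \<noteq> i - 1" "i - 2 \<noteq> i - 1" using i5 by auto
      then show ?thesis by (simp add: add.assoc)
    qed
    moreover have "g (i - 3) = 2 * (real i - 5) * (real i - 3) * top_coeff 1 (i - 3)"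
    proof -
      have e: "i - 1 - (i - 3) = 2" "i - 3 - 1 = i - 4" using i5 by auto
      have "sqrt_pow (int (i - 4) + (3 - 2 * int (i - 3))) $ 2 = 2 * (real i - 5) * (real i - 3)"
        using i5 by (simp add: sqrt_pow_nth_2 of_nat_diff algebra_simps)
      then show ?thesis unfolding g_def top_coeff_def e by simp
    qed
    ultimately show ?thesis using i5 g1 g2 unfolding coeff_hasse_part g_def by simp
  qed
qed

lemma top_coeff_1_rec:
  assumes i: "4 \<le> i" and deg: "\<And>j. 2 \<le> j \<Longrightarrow> j < i \<Longrightarrow> degree (b_poly j) \<le> j - 1"
  shows "top_coeff 1 i = (\<Sum>j\<in>{3..<i-1}. top_coeff 1 j * top_coeff 1 (i + 1 - j))"
proof -
  have d: "degree (b_poly (i - 1)) \<le> i - 1 - 1" using deg[of "i - 1"] i by simp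
  have z: "coeff (b_poly (i - 1)) (i - 1) = 0" by (rule coeff_eq_0) (use d i in arith)
  have n: "1 \<le> i - 1" using i by simp
  have e: "i - 1 - 1 = i - 2" by simp
  have c: "coeff (b_poly i) (i - 1) = coeff (hasse_part i) (i - 2) + (coeff (b_poly (i - 1)) (i - 1) - coeff (b_poly (i - 1)) (i - 2)) + coeff (product_part i) (i - 1)"
    using coeff_b_poly_decomp[OF i n] unfolding e .
  have a1: "top_coeff 1 (i - 1) = coeff (b_poly (i - 1)) (i - 2)" unfolding top_coeff_def e ..
  have "top_coeff 1 i = coeff (hasse_part i) (i - 2) + (coeff (b_poly (i - 1)) (i - 1) - coeff (b_poly (i - 1)) (i - 2)) + coeff (product_part i) (i - 1)"
    unfolding top_coeff_def[of _ i] by (rule c)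
  then show ?thesis using coeff_hasse_part_1[OF i deg] coeff_product_part_high(1)[OF i deg] z a1 by linarith
qed

lemma top_coeff_2_rec:
  assumes i: "4 \<le> i" and deg: "\<And>j. 2 \<le> j \<Longrightarrow> j < i \<Longrightarrow> degree (b_poly j) \<le> j - 1"
  shows "top_coeff 2 i = 2 * (real i - 4) * top_coeff 1 (i - 2) + top_coeff 1 (i - 1) + (\<Sum>j\<in>{3..<i-1}. top_coeff 1 j * top_coeff 2 (i + 1 - j) + top_coeff 2 j * top_coeff 1 (i + 1 - j))"
proof -
  have n: "1 \<le> i - 2" using i by simp
  have e: "i - 2 - 1 = i - 3" "i - 1 - 1 = i - 2" "i - 1 - 2 = i - 3" by auto
  have c: "coeff (b_poly i) (i - 2) = coeff (hasse_part i) (i - 3) + (coeff (b_poly (i - 1)) (i - 2) - coeff (b_poly (i - 1)) (i - 3)) + coeff (product_part i) (i - 2)"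
    using coeff_b_poly_decomp[OF i n] unfolding e .
  have a1: "top_coeff 1 (i - 1) = coeff (b_poly (i - 1)) (i - 2)" unfolding top_coeff_def e ..
  have b1: "top_coeff 2 (i - 1) = coeff (b_poly (i - 1)) (i - 3)" unfolding top_coeff_def e ..
  have "top_coeff 2 i = coeff (hasse_part i) (i - 3) + (coeff (b_poly (i - 1)) (i - 2) - coeff (b_poly (i - 1)) (i - 3)) + coeff (product_part i) (i - 2)"
    unfolding top_coeff_def[of _ i] by (rule c)
  then show ?thesis using coeff_hasse_part_2[OF i deg] coeff_product_part_high(2)[OF i deg] a1 b1 by linarith
qed

lemma top_coeff_3_rec:
  assumes i: "4 \<le> i" and deg: "\<And>j. 2 \<le> j \<Longrightarrow> j < i \<Longrightarrow> degree (b_poly j) \<le> j - 1"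
  shows "top_coeff 3 i = (if i = 4 then 1 else 2 * (real i - 5) * (real i - 3) * top_coeff 1 (i - 3))
       + 2 * (real i - 3) * top_coeff 2 (i - 2) + top_coeff 2 (i - 1)
       + (\<Sum>j\<in>{3..<i-1}. top_coeff 1 j * top_coeff 3 (i + 1 - j) + top_coeff 2 j * top_coeff 2 (i + 1 - j) + top_coeff 3 j * top_coeff 1 (i + 1 - j))"
proof -
  have n: "1 \<le> i - 3" using i by simp
  have e: "i - 3 - 1 = i - 4" "i - 1 - 2 = i - 3" "i - 1 - 3 = i - 4" by auto
  have c: "coeff (b_poly i) (i - 3) = coeff (hasse_part i) (i - 4) + (coeff (b_poly (i - 1)) (i - 3) - coeff (b_poly (i - 1)) (i - 4)) + coeff (product_part i) (i - 3)"
    using coeff_b_poly_decomp[OF i n] unfolding e .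
  have b1: "top_coeff 2 (i - 1) = coeff (b_poly (i - 1)) (i - 3)" unfolding top_coeff_def e ..
  have c1: "top_coeff 3 (i - 1) = coeff (b_poly (i - 1)) (i - 4)" unfolding top_coeff_def e ..
  have "top_coeff 3 i = coeff (hasse_part i) (i - 4) + (coeff (b_poly (i - 1)) (i - 3) - coeff (b_poly (i - 1)) (i - 4)) + coeff (product_part i) (i - 3)"
    unfolding top_coeff_def[of _ i] by (rule c)
  then show ?thesis using coeff_hasse_part_3[OF i deg] coeff_product_part_high(3)[OF i deg] b1 c1 by linarith
qed

definition alt_sign :: "nat \<Rightarrow> real" where "alt_sign c = (-1) ^ (c div 2)"

lemma alt_sign_add: "c = a1 + b1 \<Longrightarrow> even a1 \<or> even b1 \<Longrightarrow> alt_sign c = alt_sign a1 * alt_sign b1"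
proof -
  assume c: "c = a1 + b1" and e: "even a1 \<or> even b1"
  have "c div 2 = a1 div 2 + b1 div 2" using c e by (auto elim!: evenE)
  then show ?thesis by (simp add: alt_sign_def power_add)
qed

lemma alt_sign_mult_pos: "alt_sign c = alt_sign a1 * alt_sign b1 \<Longrightarrow> 0 < alt_sign a1 * x \<Longrightarrow> 0 < alt_sign b1 * y \<Longrightarrow> 0 < alt_sign c * (x * y)"
proof -
  assume c: "alt_sign c = alt_sign a1 * alt_sign b1" and h: "0 < alt_sign a1 * x" "0 < alt_sign b1 * y"
  have eq: "alt_sign a1 * alt_sign b1 * (x * y) = (alt_sign a1 * x) * (alt_sign b1 * y)"
    by (simp add: algebra_simps)
  have p: "0 < (alt_sign a1 * x) * (alt_sign b1 * y)" by (rule mult_pos_pos) (rule h(1), rule h(2))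
  show ?thesis unfolding c eq by (rule p)
qed

definition top_coeff_signs :: "nat \<Rightarrow> bool" where
  "top_coeff_signs i \<longleftrightarrow> degree (b_poly i) \<le> i - 1 \<and> (odd i \<longrightarrow> 0 < alt_sign (i - 1) * top_coeff 1 i) \<and> (even i \<longrightarrow> top_coeff 1 i = 0)
     \<and> 0 < alt_sign (i - 2) * top_coeff 2 i \<and> (even i \<longrightarrow> 0 < alt_sign (i - 3) * top_coeff 3 i)"

lemma top_coeff_signs_3: "top_coeff_signs 3"
proof -
  have a: "top_coeff 1 3 = -1/4" unfolding top_coeff_def b_poly_3 by (simp add: numeral_2_eq_2)
  have b: "top_coeff 2 3 = 1" unfolding top_coeff_def b_poly_3 by simp
  have d: "degree (b_poly 3) \<le> 3 - 1" unfolding b_poly_3 by simp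
  have s2: "alt_sign 2 = -1" "alt_sign 1 = 1" by (simp_all add: alt_sign_def)
  show ?thesis unfolding top_coeff_signs_def using a b d s2 by simp
qed

lemma top_coeff_2_2: "top_coeff 2 2 = 1/2" by (simp add: top_coeff_def b_poly_2)

lemma alt_sign_top_coeff_1_product_nonneg:
  assumes i: "odd i" and j: "j \<in> {3..<i-1}" and IH: "\<And>j. 3 \<le> j \<Longrightarrow> j < i \<Longrightarrow> top_coeff_signs j"
  shows "0 \<le> alt_sign (i - 1) * (top_coeff 1 j * top_coeff 1 (i + 1 - j))"
proof (cases "even j")
  case True
  then have "top_coeff 1 j = 0" using IH[of j] j by (auto simp: top_coeff_signs_def)
  then show ?thesis by simp
next
  case False
  have jb: "3 \<le> j" "j < i - 1" using j by auto
  have l: "odd (i + 1 - j)" using i False jb by presburger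
  have l2: "3 \<le> i + 1 - j" "i + 1 - j < i" using jb by auto
  have "0 < alt_sign (i - 1) * (top_coeff 1 j * top_coeff 1 (i + 1 - j))"
  proof (rule alt_sign_mult_pos)
    show "alt_sign (i - 1) = alt_sign (j - 1) * alt_sign (i + 1 - j - 1)"
      by (rule alt_sign_add) (use jb False in presburger)+
    show "0 < alt_sign (j - 1) * top_coeff 1 j"
      using IH[of j] jb False by (auto simp: top_coeff_signs_def)
    show "0 < alt_sign (i + 1 - j - 1) * top_coeff 1 (i + 1 - j)"
      using IH[of "i + 1 - j"] l l2 by (auto simp: top_coeff_signs_def)
  qed
  then show ?thesis by simp
qed

lemma top_coeff_1_product_even:
  assumes i: "even i" and j: "j \<in> {3..<i-1}" and IH: "\<And>j. 3 \<le> j \<Longrightarrow> j < i \<Longrightarrow> top_coeff_signs j"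
  shows "top_coeff 1 j * top_coeff 1 (i + 1 - j) = 0"
proof (cases "even j")
  case True
  then have "top_coeff 1 j = 0" using IH[of j] j by (auto simp: top_coeff_signs_def)
  then show ?thesis by simp
next
  case False
  have jb: "3 \<le> j" "j < i - 1" using j by auto
  have l: "even (i + 1 - j)" using i False jb by presburger
  have l2: "3 \<le> i + 1 - j" "i + 1 - j < i" using jb by auto
  have "top_coeff 1 (i + 1 - j) = 0"
    using IH[of "i + 1 - j"] l l2 by (auto simp: top_coeff_signs_def)
  then show ?thesis by simp
qed

lemma alt_sign_top_coeff_2_products_nonneg:
  assumes i4: "4 \<le> i" and j: "j \<in> {3..<i-1}" and IH: "\<And>j. 3 \<le> j \<Longrightarrow> j < i \<Longrightarrow> top_coeff_signs j"
  shows "0 \<le> alt_sign (i - 2) * (top_coeff 1 j * top_coeff 2 (i + 1 - j) + top_coeff 2 j * top_coeff 1 (i + 1 - j))"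
proof -
  have jb: "3 \<le> j" "j < i" and lb: "3 \<le> i + 1 - j" "i + 1 - j < i" using j by auto
  have jj: "3 \<le> j" "j < i - 1" using j by auto
  have t1: "0 \<le> alt_sign (i - 2) * (top_coeff 1 j * top_coeff 2 (i + 1 - j))"
  proof (cases "even j")
    case True
    then have "top_coeff 1 j = 0" using IH[OF jb] by (auto simp: top_coeff_signs_def)
    then show ?thesis by simp
  next
    case False
    have "0 < alt_sign (i - 2) * (top_coeff 1 j * top_coeff 2 (i + 1 - j))"
    proof (rule alt_sign_mult_pos)
      show "alt_sign (i - 2) = alt_sign (j - 1) * alt_sign (i + 1 - j - 2)"
        by (rule alt_sign_add) (use jj False in presburger)+
      show "0 < alt_sign (j - 1) * top_coeff 1 j"
        using IH[OF jb] False by (auto simp: top_coeff_signs_def)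
      show "0 < alt_sign (i + 1 - j - 2) * top_coeff 2 (i + 1 - j)"
        using IH[OF lb] by (auto simp: top_coeff_signs_def)
    qed
    then show ?thesis by simp
  qed
  have t2: "0 \<le> alt_sign (i - 2) * (top_coeff 2 j * top_coeff 1 (i + 1 - j))"
  proof (cases "even (i + 1 - j)")
    case True
    then have "top_coeff 1 (i + 1 - j) = 0" using IH[OF lb] by (auto simp: top_coeff_signs_def)
    then show ?thesis by simp
  next
    case False
    have "0 < alt_sign (i - 2) * (top_coeff 2 j * top_coeff 1 (i + 1 - j))"
    proof (rule alt_sign_mult_pos)
      show "alt_sign (i - 2) = alt_sign (j - 2) * alt_sign (i + 1 - j - 1)"
        by (rule alt_sign_add) (use jj False in presburger)+
      show "0 < alt_sign (j - 2) * top_coeff 2 j"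
        using IH[OF jb] by (auto simp: top_coeff_signs_def)
      show "0 < alt_sign (i + 1 - j - 1) * top_coeff 1 (i + 1 - j)"
        using IH[OF lb] False by (auto simp: top_coeff_signs_def)
    qed
    then show ?thesis by simp
  qed
  show ?thesis using t1 t2 by (simp add: distrib_left)
qed

lemma alt_sign_top_coeff_3_products_nonneg:
  assumes i: "even i" "4 \<le> i" and j: "j \<in> {3..<i-1}" and IH: "\<And>j. 3 \<le> j \<Longrightarrow> j < i \<Longrightarrow> top_coeff_signs j"
  shows "0 \<le> alt_sign (i - 3) * (top_coeff 1 j * top_coeff 3 (i + 1 - j) + top_coeff 2 j * top_coeff 2 (i + 1 - j) + top_coeff 3 j * top_coeff 1 (i + 1 - j))"
proof -
  have jb: "3 \<le> j" "j < i" and lb: "3 \<le> i + 1 - j" "i + 1 - j < i" using j by auto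
  have jj: "3 \<le> j" "j < i - 1" using j by auto
  have t1: "0 \<le> alt_sign (i - 3) * (top_coeff 1 j * top_coeff 3 (i + 1 - j))"
  proof (cases "even j")
    case True
    then have "top_coeff 1 j = 0" using IH[OF jb] by (auto simp: top_coeff_signs_def)
    then show ?thesis by simp
  next
    case False
    have le: "even (i + 1 - j)" using i False jj by presburger
    have "0 < alt_sign (i - 3) * (top_coeff 1 j * top_coeff 3 (i + 1 - j))"
    proof (rule alt_sign_mult_pos)
      show "alt_sign (i - 3) = alt_sign (j - 1) * alt_sign (i + 1 - j - 3)"
        by (rule alt_sign_add) (use i jj False in presburger)+
      show "0 < alt_sign (j - 1) * top_coeff 1 j"
        using IH[OF jb] False by (auto simp: top_coeff_signs_def)
      show "0 < alt_sign (i + 1 - j - 3) * top_coeff 3 (i + 1 - j)"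
        using IH[OF lb] le by (auto simp: top_coeff_signs_def)
    qed
    then show ?thesis by simp
  qed
  have t2: "0 \<le> alt_sign (i - 3) * (top_coeff 2 j * top_coeff 2 (i + 1 - j))"
  proof -
    have "0 < alt_sign (i - 3) * (top_coeff 2 j * top_coeff 2 (i + 1 - j))"
    proof (rule alt_sign_mult_pos)
      show "alt_sign (i - 3) = alt_sign (j - 2) * alt_sign (i + 1 - j - 2)"
        by (rule alt_sign_add) (use i jj in presburger)+
      show "0 < alt_sign (j - 2) * top_coeff 2 j"
        using IH[OF jb] by (auto simp: top_coeff_signs_def)
      show "0 < alt_sign (i + 1 - j - 2) * top_coeff 2 (i + 1 - j)"
        using IH[OF lb] by (auto simp: top_coeff_signs_def)
    qed
    then show ?thesis by simp
  qed
  have t3: "0 \<le> alt_sign (i - 3) * (top_coeff 3 j * top_coeff 1 (i + 1 - j))"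
  proof (cases "even (i + 1 - j)")
    case True
    then have "top_coeff 1 (i + 1 - j) = 0" using IH[OF lb] by (auto simp: top_coeff_signs_def)
    then show ?thesis by simp
  next
    case False
    have ej: "even j" using i False jj by presburger
    have "0 < alt_sign (i - 3) * (top_coeff 3 j * top_coeff 1 (i + 1 - j))"
    proof (rule alt_sign_mult_pos)
      show "alt_sign (i - 3) = alt_sign (j - 3) * alt_sign (i + 1 - j - 1)"
        by (rule alt_sign_add) (use i jj False in presburger)+
      show "0 < alt_sign (j - 3) * top_coeff 3 j"
        using IH[OF jb] ej by (auto simp: top_coeff_signs_def)
      show "0 < alt_sign (i + 1 - j - 1) * top_coeff 1 (i + 1 - j)"
        using IH[OF lb] False by (auto simp: top_coeff_signs_def)
    qed
    then show ?thesis by simp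
  qed
  show ?thesis using t1 t2 t3 by (simp add: distrib_left)
qed

lemma alt_sign_top_coeff_1_product_pos:
  assumes i: "odd i" and j: "j \<in> {3..<i-1}" and oj: "odd j" and IH: "\<And>j. 3 \<le> j \<Longrightarrow> j < i \<Longrightarrow> top_coeff_signs j"
  shows "0 < alt_sign (i - 1) * (top_coeff 1 j * top_coeff 1 (i + 1 - j))"
proof -
  have jb: "3 \<le> j" "j < i - 1" using j by auto
  have l: "odd (i + 1 - j)" using i oj jb by presburger
  have l2: "3 \<le> i + 1 - j" "i + 1 - j < i" using jb by auto
  show ?thesis
  proof (rule alt_sign_mult_pos)
    show "alt_sign (i - 1) = alt_sign (j - 1) * alt_sign (i + 1 - j - 1)"
      by (rule alt_sign_add) (use jb oj in presburger)+
    show "0 < alt_sign (j - 1) * top_coeff 1 j"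
      using IH[of j] jb oj by (auto simp: top_coeff_signs_def)
    show "0 < alt_sign (i + 1 - j - 1) * top_coeff 1 (i + 1 - j)"
      using IH[of "i + 1 - j"] l l2 by (auto simp: top_coeff_signs_def)
  qed
qed

lemma degree_b_poly_below:
  fixes i :: nat
  assumes "\<And>j. 3 \<le> j \<Longrightarrow> j < i \<Longrightarrow> top_coeff_signs j"
  shows "\<And>j. 2 \<le> j \<Longrightarrow> j < i \<Longrightarrow> degree (b_poly j) \<le> j - 1"
proof -
  fix j assume j: "2 \<le> j" "j < i"
  show "degree (b_poly j) \<le> j - 1"
  proof (cases "j = 2")
    case False
    then have "top_coeff_signs j"
      using assms j by simp
    then show ?thesis
      by (simp add: top_coeff_signs_def)
  qed (simp add: b_poly_2)
qed

lemma alt_sign_Suc_even: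
  assumes "even c"
  shows "alt_sign (Suc c) = alt_sign c"
proof -
  have "Suc c div 2 = c div 2"
    using assms by presburger
  then show ?thesis
    by (simp add: alt_sign_def)
qed

lemma top_coeff_1_sign_step:
  assumes i4: "4 \<le> i" and IH: "\<And>j. 3 \<le> j \<Longrightarrow> j < i \<Longrightarrow> top_coeff_signs j"
  shows "(odd i \<longrightarrow> 0 < alt_sign (i - 1) * top_coeff 1 i) \<and> (even i \<longrightarrow> top_coeff 1 i = 0)"
proof -
  have deg: "\<And>j. 2 \<le> j \<Longrightarrow> j < i \<Longrightarrow> degree (b_poly j) \<le> j - 1"
    by (rule degree_b_poly_below[OF IH])
  note rec = top_coeff_1_rec[OF i4 deg]
  have "0 < alt_sign (i - 1) * top_coeff 1 i" if "odd i"
  proof -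
    have i5: "5 \<le> i"
      using i4 that by presburger
    have "0 < (\<Sum>j\<in>{3..<i-1}. alt_sign (i - 1) * (top_coeff 1 j * top_coeff 1 (i + 1 - j)))"
    proof (rule sum_pos2[where i = 3])
      show "0 < alt_sign (i - 1) * (top_coeff 1 3 * top_coeff 1 (i + 1 - 3))"
        by (rule alt_sign_top_coeff_1_product_pos[OF that _ _ IH]) (use i5 in auto)
      show "0 \<le> alt_sign (i - 1) * (top_coeff 1 j * top_coeff 1 (i + 1 - j))" if "j \<in> {3..<i-1}" for j
        by (rule alt_sign_top_coeff_1_product_nonneg[OF \<open>odd i\<close> that IH])
    qed (use i5 in simp_all)
    then show ?thesis
      using rec by (simp add: sum_distrib_left)
  qed
  moreover have "top_coeff 1 i = 0" if "even i"
  proof -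
    have "(\<Sum>j\<in>{3..<i-1}. top_coeff 1 j * top_coeff 1 (i + 1 - j)) = 0"
      by (intro sum.neutral ballI top_coeff_1_product_even[OF that _ IH])
    then show ?thesis
      using rec by simp
  qed
  ultimately show ?thesis
    by blast
qed

lemma top_coeff_2_sign_step:
  assumes i4: "4 \<le> i" and IH: "\<And>j. 3 \<le> j \<Longrightarrow> j < i \<Longrightarrow> top_coeff_signs j"
  shows "0 < alt_sign (i - 2) * top_coeff 2 i"
proof -
  have deg: "\<And>j. 2 \<le> j \<Longrightarrow> j < i \<Longrightarrow> degree (b_poly j) \<le> j - 1"
    by (rule degree_b_poly_below[OF IH])
  have rec: "alt_sign (i - 2) * top_coeff 2 i
      = alt_sign (i - 2) * (2 * (real i - 4) * top_coeff 1 (i - 2)) + alt_sign (i - 2) * top_coeff 1 (i - 1)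
        + (\<Sum>j\<in>{3..<i-1}. alt_sign (i - 2) * (top_coeff 1 j * top_coeff 2 (i + 1 - j) + top_coeff 2 j * top_coeff 1 (i + 1 - j)))"
    using top_coeff_2_rec[OF i4 deg] by (simp add: sum_distrib_left distrib_left sum.distrib)
  have "0 \<le> (\<Sum>j\<in>{3..<i-1}. alt_sign (i - 2) * (top_coeff 1 j * top_coeff 2 (i + 1 - j) + top_coeff 2 j * top_coeff 1 (i + 1 - j)))"
    by (rule sum_nonneg) (rule alt_sign_top_coeff_2_products_nonneg[OF i4 _ IH])
  moreover have "0 < alt_sign (i - 2) * (2 * (real i - 4) * top_coeff 1 (i - 2)) + alt_sign (i - 2) * top_coeff 1 (i - 1)"
  proof (cases "odd i")
    case True
    then have i5: "5 \<le> i" and "even (i - 3)" "odd (i - 2)" "even (i - 1)" "i - 2 = Suc (i - 3)" "i - 2 - 1 = i - 3"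
      using i4 by presburger+
    then have s: "alt_sign (i - 2) = alt_sign (i - 3)"
      by (metis alt_sign_Suc_even)
    have "0 < alt_sign (i - 3) * top_coeff 1 (i - 2)"
      using IH[of "i - 2"] i5 \<open>odd (i - 2)\<close> \<open>i - 2 - 1 = i - 3\<close> by (simp add: top_coeff_signs_def)
    then have "0 < 2 * (real i - 4) * (alt_sign (i - 3) * top_coeff 1 (i - 2))"
      using i5 by simp
    moreover have "top_coeff 1 (i - 1) = 0"
      using IH[of "i - 1"] i5 \<open>even (i - 1)\<close> by (simp add: top_coeff_signs_def)
    ultimately show ?thesis
      by (simp add: s mult_ac)
  next
    case False
    then have "i = 4 \<or> (6 \<le> i \<and> even (i - 2))" "odd (i - 1)" "i - 1 - 1 = i - 2"
      using i4 by presburger+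
    moreover have "top_coeff_signs (i - 1)" "6 \<le> i \<Longrightarrow> top_coeff_signs (i - 2)"
      using IH i4 by simp_all
    ultimately show ?thesis
      by (auto simp: top_coeff_signs_def)
  qed
  ultimately show ?thesis
    unfolding rec by linarith
qed

lemma top_coeff_3_sign_step:
  assumes i4: "4 \<le> i" and "even i" and IH: "\<And>j. 3 \<le> j \<Longrightarrow> j < i \<Longrightarrow> top_coeff_signs j"
  shows "0 < alt_sign (i - 3) * top_coeff 3 i"
proof -
  have deg: "\<And>j. 2 \<le> j \<Longrightarrow> j < i \<Longrightarrow> degree (b_poly j) \<le> j - 1"
    by (rule degree_b_poly_below[OF IH])
  have "i - 3 = Suc (i - 4)" "even (i - 4)"
    using i4 \<open>even i\<close> by presburger+
  then have s34: "alt_sign (i - 3) = alt_sign (i - 4)"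
    by (metis alt_sign_Suc_even)
  have rec: "alt_sign (i - 3) * top_coeff 3 i
      = alt_sign (i - 3) * (if i = 4 then 1 else 2 * (real i - 5) * (real i - 3) * top_coeff 1 (i - 3))
        + alt_sign (i - 3) * (2 * (real i - 3) * top_coeff 2 (i - 2)) + alt_sign (i - 3) * top_coeff 2 (i - 1)
        + (\<Sum>j\<in>{3..<i-1}. alt_sign (i - 3) * (top_coeff 1 j * top_coeff 3 (i + 1 - j)
            + top_coeff 2 j * top_coeff 2 (i + 1 - j) + top_coeff 3 j * top_coeff 1 (i + 1 - j)))"
    using top_coeff_3_rec[OF i4 deg] by (simp add: sum_distrib_left distrib_left sum.distrib)
  have "0 \<le> (\<Sum>j\<in>{3..<i-1}. alt_sign (i - 3) * (top_coeff 1 j * top_coeff 3 (i + 1 - j)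
      + top_coeff 2 j * top_coeff 2 (i + 1 - j) + top_coeff 3 j * top_coeff 1 (i + 1 - j)))"
    by (rule sum_nonneg) (rule alt_sign_top_coeff_3_products_nonneg[OF \<open>even i\<close> i4 _ IH])
  moreover have "0 \<le> alt_sign (i - 3) * (if i = 4 then 1 else 2 * (real i - 5) * (real i - 3) * top_coeff 1 (i - 3))"
  proof (cases "i = 4")
    case False
    then have "6 \<le> i" "odd (i - 3)" "i - 3 - 1 = i - 4"
      using i4 \<open>even i\<close> by presburger+
    moreover have "top_coeff_signs (i - 3)"
      using IH \<open>6 \<le> i\<close> by simp
    ultimately have "0 \<le> 2 * (real i - 5) * (real i - 3) * (alt_sign (i - 4) * top_coeff 1 (i - 3))"
      by (auto simp: top_coeff_signs_def less_imp_le)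
    then show ?thesis
      using False by (simp add: s34 mult_ac)
  qed (simp add: alt_sign_def)
  moreover have "0 \<le> alt_sign (i - 3) * (2 * (real i - 3) * top_coeff 2 (i - 2))"
  proof -
    have "0 \<le> alt_sign (i - 4) * top_coeff 2 (i - 2)"
    proof (cases "i = 4")
      case False
      then have "top_coeff_signs (i - 2)" "i - 2 - 2 = i - 4"
        using IH i4 by simp_all
      then show ?thesis
        by (auto simp: top_coeff_signs_def less_imp_le)
    qed (simp add: alt_sign_def top_coeff_2_2)
    then have "0 \<le> 2 * (real i - 3) * (alt_sign (i - 4) * top_coeff 2 (i - 2))"
      by (rule mult_nonneg_nonneg[rotated]) (use i4 in simp)
    then show ?thesis
      by (simp add: s34 mult_ac)
  qed
  moreover have "0 < alt_sign (i - 3) * top_coeff 2 (i - 1)"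
    using IH[of "i - 1"] i4 by (simp add: top_coeff_signs_def numeral_eq_Suc)
  ultimately show ?thesis
    unfolding rec by linarith
qed

lemma top_coeff_signs_step:
  assumes i4: "4 \<le> i" and IH: "\<And>j. 3 \<le> j \<Longrightarrow> j < i \<Longrightarrow> top_coeff_signs j"
  shows "top_coeff_signs i"
  using degree_b_poly_le_step[OF i4 degree_b_poly_below[where i=i, OF IH]] top_coeff_1_sign_step[OF i4 IH]
    top_coeff_2_sign_step[OF i4 IH] top_coeff_3_sign_step[OF i4 _ IH]
  unfolding top_coeff_signs_def by simp

lemma top_coeff_signs_all: "3 \<le> i \<Longrightarrow> top_coeff_signs i"
proof (induction i rule: less_induct)
  case (less i)
  show ?case
  proof (cases "i = 3")
    case True then show ?thesis using top_coeff_signs_3 by simp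
  next
    case False
    then have "4 \<le> i" using less.prems by simp
    then show ?thesis by (rule top_coeff_signs_step) (use less.IH in auto)
  qed
qed

lemma degree_eqI_highest:
  "coeff p d \<noteq> 0 \<Longrightarrow> (\<And>m. d < m \<Longrightarrow> coeff p m = 0) \<Longrightarrow> degree p = d"
  by (meson antisym degree_le le_degree)

lemma degree_parts_b_poly:
  assumes i: "3 \<le> i" and R: "b_poly i = poly_of_parts S Q"
  shows "degree S = (i - 1) div 2" "degree Q = (i - 3) div 2"
proof -
  have signs: "top_coeff_signs i"
    by (rule top_coeff_signs_all[OF i])
  have high: "coeff (b_poly i) n = 0" if "i - 1 < n" for n
    using signs that by (simp add: top_coeff_signs_def coeff_eq_0)
  have cS: "coeff (pcompose S [:1/4, -1/4:]) m = coeff (b_poly i) (2 * m)" for m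
    unfolding R coeff_poly_of_parts by simp
  have cQ: "coeff (pcompose Q [:1/4, -1/4:]) m = coeff (b_poly i) (2 * m + 1)" for m
    unfolding R coeff_poly_of_parts by simp
  have "degree (pcompose S [:1/4, -1/4:]) = (i - 1) div 2"
  proof (rule degree_eqI_highest)
    have "top_coeff (if odd i then 1 else 2) i \<noteq> 0"
      using signs by (auto simp: top_coeff_signs_def)
    moreover have "i - (if odd i then 1 else 2) = 2 * ((i - 1) div 2)"
      using i by presburger
    ultimately show "coeff (pcompose S [:1/4, -1/4:]) ((i - 1) div 2) \<noteq> 0"
      unfolding cS top_coeff_def by simp
  next
    fix m assume "(i - 1) div 2 < m"
    then show "coeff (pcompose S [:1/4, -1/4:]) m = 0"
      unfolding cS by (intro high) presburger
  qed
  then show "degree S = (i - 1) div 2"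
    using degree_pcompose_quarter[of S] by simp
  have "degree (pcompose Q [:1/4, -1/4:]) = (i - 3) div 2"
  proof (rule degree_eqI_highest)
    have "top_coeff (if odd i then 2 else 3) i \<noteq> 0"
      using signs by (auto simp: top_coeff_signs_def)
    moreover have "i - (if odd i then 2 else 3) = 2 * ((i - 3) div 2) + 1"
      using i by presburger
    ultimately show "coeff (pcompose Q [:1/4, -1/4:]) ((i - 3) div 2) \<noteq> 0"
      unfolding cQ top_coeff_def by simp
  next
    fix m assume m: "(i - 3) div 2 < m"
    show "coeff (pcompose Q [:1/4, -1/4:]) m = 0"
    proof (cases "2 * m + 1 = i - 1")
      case True
      then have "even i" "top_coeff 1 i = coeff (b_poly i) (2 * m + 1)"
        using i by (presburger, simp add: top_coeff_def)
      then show ?thesis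
        using signs unfolding cQ by (simp add: top_coeff_signs_def)
    next
      case False
      then show ?thesis
        unfolding cQ using m i by (intro high) presburger
    qed
  qed
  then show "degree Q = (i - 3) div 2"
    using degree_pcompose_quarter[of Q] by simp
qed

lemma int_poly_obtain_int_coeffs:
  fixes p :: "real poly"
  assumes "int_poly p"
  obtains q :: "int poly" where "p = map_poly of_int q" "degree q = degree p"
proof
  have "map_poly of_int (map_poly floor p) = p"
    using assms by (intro poly_eqI) (simp add: coeff_map_poly int_poly_def)
  then show "p = map_poly of_int (map_poly floor p)"
    by simp
  then show "degree (map_poly floor p) = degree p"
    by (metis degree_map_poly of_int_eq_0_iff)
qed

theorem proposition3:
  fixes i :: nat
  assumes "i > 2"
  shows "\<exists>Q S :: int poly.
           degree Q = (i - 3) div 2 \<and> degree S = (i - 1) div 2 \<and>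
           a i = fps_X ^ (i - 2) *
             (fps_of_poly (map_poly of_int Q) * one_minus_4z_pow (- real (i - 2))
              + fps_of_poly (map_poly of_int S) * one_minus_4z_pow (- (real i - 3 / 2)))"
proof -
  have i: "3 \<le> i"
    using assms by simp
  obtain S Q where "int_poly S" "int_poly Q" and parts: "b_poly i = poly_of_parts S Q"
    and b: "b_gf i = fps_of_poly S * sqrt_pow (3 - 2 * int i) + fps_of_poly Q * sqrt_pow (4 - 2 * int i)"
    using b_poly_eq_poly_of_parts[OF i] .
  obtain S' Q' :: "int poly" where S': "S = map_poly of_int S'" "degree S' = degree S"
    and Q': "Q = map_poly of_int Q'" "degree Q' = degree Q"
    using int_poly_obtain_int_coeffs[OF \<open>int_poly S\<close>] int_poly_obtain_int_coeffs[OF \<open>int_poly Q\<close>] by metis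
  have "sqrt_pow (3 - 2 * int i) = one_minus_4z_pow (- (real i - 3 / 2))"
    unfolding sqrt_pow_def by (rule arg_cong[where f = one_minus_4z_pow]) simp
  moreover have "sqrt_pow (4 - 2 * int i) = one_minus_4z_pow (- real (i - 2))"
    unfolding sqrt_pow_def by (rule arg_cong[where f = one_minus_4z_pow]) (use i in \<open>simp add: of_nat_diff\<close>)
  ultimately have "a i = fps_X ^ (i - 2) * (fps_of_poly (map_poly of_int Q') * one_minus_4z_pow (- real (i - 2))
      + fps_of_poly (map_poly of_int S') * one_minus_4z_pow (- (real i - 3 / 2)))"
    using a_eq_b_gf[of i] i by (simp add: b S'(1) Q'(1) add.commute)
  moreover have "degree Q' = (i - 3) div 2" "degree S' = (i - 1) div 2"
    using degree_parts_b_poly[OF i parts] S'(2) Q'(2) by simp_all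
  ultimately show ?thesis
    by blast
qed

end
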